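(* Let $f:\mathbb{R}^n\to\mathbb{R}^n$ be continuously differentiable, $q:\mathbb{R}^n\to\mathbb{R}\cup\{+\infty\}$ proper, convex and lower semicontinuous, and $H=f+\partial q$. Assume that $H$ is metrically regular at $(\bar x,0)\in\mathrm{gph}\, H$ and that $\partial q$ is semismooth$^*$ at $(\bar x,-f(\bar x))$. Then for every $\gamma>0$ there exists a neighborhood $U$ of $\bar x$ such that for every starting point $x^{(0)}\in U$ the following iteration converges superlinearly to $\bar x$: given $x^{(k)}$, compute $u^{(k)}=u_\gamma(x^{(k)})$, choose a symmetric positive semidefinite matrix $G^{(k)}$ with $\|G^{(k)}\|\le1$ and $G^{(k)}v^*\in D^*(\partial q)\bigl(x^{(k)}+u^{(k)},-\gamma u^{(k)}-f(x^{(k)})\bigr)((I-G^{(k)})v^* )$ for all $v^*\in\mathbb{R}^n$, solve \[((I-G^{(k)})\nabla f(x^{(k)})+G^{(k)})\Delta x^{(k)}=(\gamma(I-G^{(k)})+G^{(k)})u^{(k)},\] and set $x^{(k+1)}=x^{(k)}+\Delta x^{(k)}$.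
   Context: $u_\gamma(x)=\arg\min_u\bigl(\tfrac12\gamma\|u\|^2+\langle f(x),u\rangle+q(x+u)\bigr)$. Metric regularity of $F$ around $(\bar x,\bar y)$: $\mathrm{gph}\, F$ locally closed and $\operatorname{dist}(x,F^{-1}(y))\le\kappa\operatorname{dist}(y,F(x))$ for all $(x,y)$ in a neighborhood of $(\bar x,\bar y)$, for some $\kappa\ge0$. For a closed set $C$ and $\bar z\in C$: $T_C(\bar z)=\{w:\exists t_k\downarrow0,w_k\to w,\bar z+t_kw_k\in C\}$; $\widehat N_C(\bar z)=T_C(\bar z)^\circ$; for a direction $w$, $N_C(\bar z;w)$ is the set of $z^*$ with $z_k^*\to z^*$, $z_k^*\in\widehat N_C(\bar z+t_kw_k)$ for some $t_k\downarrow0$, $w_k\to w$, $\bar z+t_kw_k\in C$; $N_C(\bar z)=N_C(\bar z;0)$. Coderivatives: $D^*F(\bar x,\bar y)(v^* )=\{u^*:(u^*,-v^* )\in N_{\mathrm{gph}\, F}(\bar x,\bar y)\}$ and $D^*F((\bar x,\bar y);(u,v))(v^* )=\{u^*:(u^*,-v^* )\in N_{\mathrm{gph}\, F}((\bar x,\bar y);(u,v))\}$, with $\mathrm{gph}\, D^*F(\cdot)=\{(v^*,u^* ):u^*\in D^*F(\cdot)(v^* )\}$. $F$ is semismooth$^*$ at $(\bar x,\bar y)$ if $\langle u^*,u\rangle=\langle v^*,v\rangle$ for all $(u,v)$ and all $(v^*,u^* )\in\mathrm{gph}\, D^*F((\bar x,\bar y);(u,v))$. Superlinear convergence: $x^{(k)}\to\bar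 x$ and $\|x^{(k+1)}-\bar x\|=o(\|x^{(k)}-\bar x\|)$. *)

theory Defs
  imports "HOL-Analysis.Analysis" "HOL-Library.Landau_Symbols"
begin

definition proper_fun :: "('a \<Rightarrow> ereal) \<Rightarrow> bool" where
  "proper_fun q \<longleftrightarrow> (\<forall>x. q x \<noteq> -\<infinity>) \<and> (\<exists>x. q x < \<infinity>)"

definition convex_fun :: "('a::real_vector \<Rightarrow> ereal) \<Rightarrow> bool" where
  "convex_fun q \<longleftrightarrow> (\<forall>x y t. 0 < t \<and> t < 1 \<longrightarrow>
      q (t *\<^sub>R x + (1 - t) *\<^sub>R y) \<le> ereal t * q x + ereal (1 - t) * q y)"

definition lsc_fun :: "('a::topological_space \<Rightarrow> ereal) \<Rightarrow> bool" where
  "lsc_fun q \<longleftrightarrow> (\<forall>x. q x \<le> Liminf (at x) q)"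

definition subdiff :: "('a::real_inner \<Rightarrow> ereal) \<Rightarrow> 'a \<Rightarrow> 'a set" where
  "subdiff q x = {v. \<bar>q x\<bar> \<noteq> \<infinity> \<and> (\<forall>y. q x + ereal (v \<bullet> (y - x)) \<le> q y)}"

definition gph :: "('a \<Rightarrow> 'b set) \<Rightarrow> ('a \<times> 'b) set" where
  "gph F = {(x, y). y \<in> F x}"

definition inv_map :: "('a \<Rightarrow> 'b set) \<Rightarrow> 'b \<Rightarrow> 'a set" where
  "inv_map F y = {x. y \<in> F x}"

text \<open>Metric regularity around (xb,yb); dist(.,empty set) = +infinity is handled explicitly.\<close>
definition metrically_regular ::
  "('a::real_normed_vector \<Rightarrow> 'b::real_normed_vector set) \<Rightarrow> 'a \<Rightarrow> 'b \<Rightarrow> bool" where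
  "metrically_regular F xb yb \<longleftrightarrow>
     (\<exists>\<epsilon>>0. closed (gph F \<inter> cball (xb, yb) \<epsilon>)) \<and>
     (\<exists>\<kappa>\<ge>0. \<exists>\<delta>>0. \<forall>x y. dist x xb < \<delta> \<and> dist y yb < \<delta> \<longrightarrow>
        (F x \<noteq> {} \<longrightarrow> inv_map F y \<noteq> {} \<and>
           infdist x (inv_map F y) \<le> \<kappa> * infdist y (F x)))"

definition tangent_cone :: "'a::real_normed_vector set \<Rightarrow> 'a \<Rightarrow> 'a set" where
  "tangent_cone C z = {w. \<exists>t ws. (\<forall>k. t k > 0) \<and> t \<longlonglongrightarrow> 0 \<and> ws \<longlonglongrightarrow> w \<and>
      (\<forall>k. z + t k *\<^sub>R ws k \<in> C)}"

definition polar :: "'a::real_inner set \<Rightarrow> 'a set" where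
  "polar T = {s. \<forall>w\<in>T. s \<bullet> w \<le> 0}"

definition regular_normal_cone :: "'a::real_inner set \<Rightarrow> 'a \<Rightarrow> 'a set" where
  "regular_normal_cone C z = polar (tangent_cone C z)"

definition dir_normal_cone :: "'a::real_inner set \<Rightarrow> 'a \<Rightarrow> 'a \<Rightarrow> 'a set" where
  "dir_normal_cone C z w = {s. \<exists>t ws ss. (\<forall>k. t k > 0) \<and> t \<longlonglongrightarrow> 0 \<and> ws \<longlonglongrightarrow> w \<and>
      (\<forall>k. z + t k *\<^sub>R ws k \<in> C) \<and>
      (\<forall>k. ss k \<in> regular_normal_cone C (z + t k *\<^sub>R ws k)) \<and> ss \<longlonglongrightarrow> s}"

definition limiting_normal_cone :: "'a::real_inner set \<Rightarrow> 'a \<Rightarrow> 'a set" where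
  "limiting_normal_cone C z = dir_normal_cone C z 0"

definition coderiv :: "('a::real_inner \<Rightarrow> 'b::real_inner set) \<Rightarrow> 'a \<Rightarrow> 'b \<Rightarrow> 'b \<Rightarrow> 'a set" where
  "coderiv F x y vs = {us. (us, - vs) \<in> limiting_normal_cone (gph F) (x, y)}"

definition dir_coderiv ::
  "('a::real_inner \<Rightarrow> 'b::real_inner set) \<Rightarrow> 'a \<Rightarrow> 'b \<Rightarrow> 'a \<Rightarrow> 'b \<Rightarrow> 'b \<Rightarrow> 'a set" where
  "dir_coderiv F x y u v vs = {us. (us, - vs) \<in> dir_normal_cone (gph F) (x, y) (u, v)}"

definition semismooth_star :: "('a::real_inner \<Rightarrow> 'b::real_inner set) \<Rightarrow> 'a \<Rightarrow> 'b \<Rightarrow> bool" where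
  "semismooth_star F x y \<longleftrightarrow>
     (\<forall>u v vs us. us \<in> dir_coderiv F x y u v vs \<longrightarrow> us \<bullet> u = vs \<bullet> v)"

definition u_gamma :: "real \<Rightarrow> ('a::real_inner \<Rightarrow> 'a) \<Rightarrow> ('a \<Rightarrow> ereal) \<Rightarrow> 'a \<Rightarrow> 'a" where
  "u_gamma \<gamma> f q x = (THE u. \<forall>w.
      ereal (\<gamma> / 2 * norm u ^ 2 + f x \<bullet> u) + q (x + u)
        \<le> ereal (\<gamma> / 2 * norm w ^ 2 + f x \<bullet> w) + q (x + w))"

end

theory Submission
  imports Defs
begin

(* Let u = u_gamma x, let z = (x + u, - gamma u - f x), the point of the graph of
   the subdifferential of q at which G is chosen, and let M be the matrix of the linear system.
   The coderivative condition says that (G w, - (I - G) w) is a limiting normal to that graph at z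
   for every w.  Metric regularity of f + (subdifferential of q) bounds such normals through the
   adjoint of the linearization, which makes M uniformly invertible near xb; semismoothness*
   makes their pairing with z - (xb, - f xb) small compared with |w| |x - xb|.  Testing the new
   error e = x + Delta - xb against the w with M^T w = e, and using the C1 remainder of f, gives
   |e| <= eps |x - xb| near xb for every eps > 0, which is local superlinear convergence. *)

lemma norm_matrix_vector_mult_le:
  fixes A :: "real^'n^'m"
  shows "norm (A *v x) \<le> norm A * norm x"
proof -
  have "norm (A *v x) = L2_set (\<lambda>i. \<bar>A $ i \<bullet> x\<bar>) UNIV"
    by (simp add: norm_vec_def matrix_mult_dot)
  also have "\<dots> \<le> L2_set (\<lambda>i. norm (A $ i) * norm x) UNIV"
    by (rule L2_set_mono) (simp_all add: Cauchy_Schwarz_ineq2)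
  also have "\<dots> = norm A * norm x"
    by (simp add: L2_set_left_distrib norm_vec_def[of A])
  finally show ?thesis .
qed

lemma norm_transpose: "norm (transpose A) = norm (A :: real^'n^'m)"
proof -
  have "transpose A \<bullet> transpose A = A \<bullet> A"
    unfolding inner_vec_def transpose_def vec_lambda_beta by (rule sum.swap)
  then show ?thesis by (simp add: norm_eq_sqrt_inner)
qed

lemma transpose_add: "transpose (A + B) = transpose A + transpose (B :: 'a::semiring_1^'n^'m)"
  by (simp add: transpose_def vec_eq_iff)

lemma transpose_diff: "transpose (A - B) = transpose A - transpose (B :: 'a::ring_1^'n^'m)"
  by (simp add: transpose_def vec_eq_iff)

lemma matrix_vector_mult_uminus_right: "A *v (- x) = - ((A::real^'n^'m) *v x)"
  using linear_neg[OF matrix_vector_mul_linear[of A]] by simp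

lemma symmetric_matrix_inner:
  fixes G :: "real^'n^'n"
  assumes "transpose G = G"
  shows "(G *v w) \<bullet> a = w \<bullet> (G *v a)"
  by (metis assms dot_lmul_matrix transpose_matrix_vector)

lemma transpose_matrix_inner: "(transpose A *v w) \<bullet> a = w \<bullet> ((A::real^'n^'m) *v a)"
  by (metis dot_lmul_matrix transpose_matrix_vector)

lemma onorm_le_one_imp_norm_le:
  fixes G :: "real^'n^'m"
  assumes "onorm (\<lambda>v. G *v v) \<le> 1"
  shows "norm (G *v v) \<le> norm v"
proof -
  have "norm (G *v v) \<le> onorm (\<lambda>v. G *v v) * norm v"
    by (rule onorm) simp
  also have "\<dots> \<le> 1 * norm v" using assms by (intro mult_right_mono) auto
  finally show ?thesis by simp
qed

lemma onorm_le_one_imp_norm_complement_le: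
  fixes G :: "real^'n^'n"
  assumes "onorm (\<lambda>v. G *v v) \<le> 1"
  shows "norm ((mat 1 - G) *v v) \<le> 2 * norm v"
  using norm_triangle_ineq4[of v "G *v v"] onorm_le_one_imp_norm_le[OF assms, of v]
  by (simp add: matrix_vector_mult_diff_rdistrib)

lemma norm_le_adjoint_perturb:
  fixes A A0 :: "real^'n^'m"
  assumes "norm a \<le> \<kappa> * norm (b - transpose A *v a)" "\<kappa> \<ge> 0"
    and "norm (A - A0) \<le> \<eta>" "\<kappa> * \<eta> \<le> 1 / 2"
  shows "norm a \<le> 2 * \<kappa> * norm (b - transpose A0 *v a)"
proof -
  have "norm (transpose (A - A0) *v a) \<le> \<eta> * norm a"
    using norm_matrix_vector_mult_le[of "transpose (A - A0)" a] assms(3)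
    by (simp add: norm_transpose mult_right_mono order_trans)
  moreover have "b - transpose A *v a = (b - transpose A0 *v a) - transpose (A - A0) *v a"
    by (simp add: transpose_diff matrix_vector_mult_diff_rdistrib)
  then have "norm (b - transpose A *v a) \<le> norm (b - transpose A0 *v a) + norm (transpose (A - A0) *v a)"
    by (metis norm_triangle_ineq4)
  ultimately have "norm (b - transpose A *v a) \<le> norm (b - transpose A0 *v a) + \<eta> * norm a"
    by linarith
  then have "norm a \<le> \<kappa> * norm (b - transpose A0 *v a) + \<kappa> * \<eta> * norm a"
    using assms(1,2) by (smt (verit) distrib_left mult.assoc mult_left_mono)
  moreover have "\<kappa> * \<eta> * norm a \<le> 1 / 2 * norm a"
    using mult_right_mono[OF assms(4) norm_ge_zero] .
  ultimately show ?thesis by linarith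
qed

lemma has_derivative_eventually_remainder_le:
  assumes "(f has_derivative L) (at x)" "e > 0"
  shows "\<forall>\<^sub>F y in nhds x. norm (f y - f x - L (y - x)) \<le> e * norm (y - x)"
  using assms unfolding has_derivative_at_alt eventually_nhds_metric dist_norm by blast

lemma has_derivative_imp_calm:
  assumes "(f has_derivative L) (at x0)"
  obtains C where "C \<ge> 0" "\<forall>\<^sub>F x in nhds x0. norm (f x - f x0) \<le> C * norm (x - x0)"
proof -
  obtain K where K: "K > 0" "\<And>h. norm (L h) \<le> norm h * K"
    using assms has_derivative_bounded_linear bounded_linear.pos_bounded by blast
  have "\<forall>\<^sub>F x in nhds x0. norm (f x - f x0) \<le> (K + 1) * norm (x - x0)"
    using has_derivative_eventually_remainder_le[OF assms zero_less_one]
  proof eventually_elim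
    case (elim x)
    then show ?case
      using norm_triangle_ineq[of "f x - f x0 - L (x - x0)" "L (x - x0)"] K(2)[of "x - x0"]
      by (simp add: algebra_simps)
  qed
  with K(1) show ?thesis using that[of "K + 1"] by simp
qed

lemma calm_imp_tendsto:
  assumes "\<forall>\<^sub>F x in nhds a. norm (g x - b) \<le> C * norm (x - a)"
  shows "filterlim g (nhds b) (nhds a)"
proof -
  have "((\<lambda>x. C * norm (x - a)) \<longlongrightarrow> C * norm (a - a)) (nhds a)"
    by (intro tendsto_intros filterlim_ident)
  then have "((\<lambda>x. g x - b) \<longlongrightarrow> 0) (nhds a)"
    using Lim_null_comparison[OF assms] by simp
  then show ?thesis by (rule LIM_zero_cancel)
qed

lemma has_derivative_difference_quotient_seq:
  assumes fd: "(f has_derivative L) (at x)"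
    and t: "\<And>k. t k > 0" "t \<longlonglongrightarrow> 0" and h: "h \<longlonglongrightarrow> hl"
  shows "(\<lambda>k. (1 / t k) *\<^sub>R (f (x + t k *\<^sub>R h k) - f x)) \<longlonglongrightarrow> L hl"
proof -
  have bl: "bounded_linear L" using fd by (rule has_derivative_bounded_linear)
  obtain B where B: "B > 0" "\<And>k. norm (h k) \<le> B"
    using convergent_imp_bounded[OF h] unfolding bounded_pos by blast
  have "(\<lambda>k. t k *\<^sub>R h k) \<longlonglongrightarrow> 0 *\<^sub>R hl" by (intro tendsto_intros t h)
  then have xk: "(\<lambda>k. x + t k *\<^sub>R h k) \<longlonglongrightarrow> x"
    using tendsto_add[OF tendsto_const, of _ 0 sequentially x] by simp
  have "(\<lambda>k. (1 / t k) *\<^sub>R (f (x + t k *\<^sub>R h k) - f x) - L (h k)) \<longlonglongrightarrow> 0"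
  proof (rule tendstoI)
    fix e :: real assume "e > 0"
    then have "\<forall>\<^sub>F y in nhds x. norm (f y - f x - L (y - x)) \<le> e / (2 * B) * norm (y - x)"
      using B by (intro has_derivative_eventually_remainder_le[OF fd]) simp
    then have "\<forall>\<^sub>F k in sequentially.
        norm (f (x + t k *\<^sub>R h k) - f x - L (t k *\<^sub>R h k)) \<le> e / (2 * B) * norm (t k *\<^sub>R h k)"
      using xk by (auto simp: filterlim_iff tendsto_def)
    then show "\<forall>\<^sub>F k in sequentially. dist ((1 / t k) *\<^sub>R (f (x + t k *\<^sub>R h k) - f x) - L (h k)) 0 < e"
    proof eventually_elim
      case (elim k)
      have "(1 / t k) *\<^sub>R (f (x + t k *\<^sub>R h k) - f x) - L (h k)
          = (1 / t k) *\<^sub>R (f (x + t k *\<^sub>R h k) - f x - L (t k *\<^sub>R h k))"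
        using t(1)[of k] by (simp add: linear_scale[OF bounded_linear.linear[OF bl]] algebra_simps)
      then have "norm ((1 / t k) *\<^sub>R (f (x + t k *\<^sub>R h k) - f x) - L (h k))
          = norm (f (x + t k *\<^sub>R h k) - f x - L (t k *\<^sub>R h k)) / t k"
        using t(1)[of k] by simp
      also have "\<dots> \<le> e / (2 * B) * norm (h k)"
        using elim t(1)[of k] by (simp add: divide_le_eq algebra_simps)
      also have "\<dots> \<le> e / 2" using B \<open>e > 0\<close> by (simp add: field_simps)
      finally show ?case using \<open>e > 0\<close> by simp
    qed
  qed
  then have "(\<lambda>k. ((1 / t k) *\<^sub>R (f (x + t k *\<^sub>R h k) - f x) - L (h k)) + L (h k)) \<longlonglongrightarrow> 0 + L hl"
    by (intro tendsto_add bounded_linear.tendsto[OF bl h])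
  then show ?thesis by simp
qed

lemma has_derivative_continuous_remainder:
  fixes f :: "real^'n \<Rightarrow> real^'m" and Df :: "real^'n \<Rightarrow> real^'n^'m"
  assumes fd: "\<And>x. (f has_derivative (\<lambda>h. Df x *v h)) (at x)" and "isCont Df xb" "\<eta> > 0"
  shows "\<forall>\<^sub>F x in nhds xb. norm (f x - f xb - Df x *v (x - xb)) \<le> \<eta> * norm (x - xb)"
proof -
  have "((\<lambda>x. Df x) \<longlongrightarrow> Df xb) (nhds xb)"
    using isCont_tendsto_compose[OF \<open>isCont Df xb\<close> filterlim_ident] by simp
  then have "\<forall>\<^sub>F x in nhds xb. dist (Df x) (Df xb) < \<eta> / 2"
    using \<open>\<eta> > 0\<close> by (intro tendstoD) simp_all
  moreover have "\<forall>\<^sub>F x in nhds xb. norm (f x - f xb - Df xb *v (x - xb)) \<le> \<eta> / 2 * norm (x - xb)"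
    using \<open>\<eta> > 0\<close> by (intro has_derivative_eventually_remainder_le[OF fd]) simp
  ultimately show ?thesis
  proof eventually_elim
    case (elim x)
    have "norm ((Df x - Df xb) *v (x - xb)) \<le> \<eta> / 2 * norm (x - xb)"
      using norm_matrix_vector_mult_le[of "Df x - Df xb" "x - xb"] elim(1)
      by (smt (verit) dist_norm mult_right_mono norm_ge_zero)
    moreover have "f x - f xb - Df x *v (x - xb)
        = (f x - f xb - Df xb *v (x - xb)) - (Df x - Df xb) *v (x - xb)"
      by (simp add: matrix_vector_mult_diff_rdistrib)
    then have "norm (f x - f xb - Df x *v (x - xb))
        \<le> norm (f x - f xb - Df xb *v (x - xb)) + norm ((Df x - Df xb) *v (x - xb))"
      by (metis norm_triangle_ineq4)
    ultimately show ?case using elim(2) by linarith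
  qed
qed

section \<open>The proximal step\<close>

lemma subdiff_imp_finite: "v \<in> subdiff q x \<Longrightarrow> q x = ereal (real_of_ereal (q x))"
  unfolding subdiff_def by (cases "q x") auto

lemma subdiff_le: "v \<in> subdiff q x \<Longrightarrow> q x + ereal (v \<bullet> (y - x)) \<le> q y"
  unfolding subdiff_def by auto

lemma subdiff_monotone:
  assumes "v1 \<in> subdiff q x1" "v2 \<in> subdiff q x2"
  shows "(v1 - v2) \<bullet> (x1 - x2) \<ge> 0"
proof -
  define c1 c2 where "c1 = real_of_ereal (q x1)" and "c2 = real_of_ereal (q x2)"
  have "c1 + v1 \<bullet> (x2 - x1) \<le> c2" "c2 + v2 \<bullet> (x1 - x2) \<le> c1"
    using subdiff_le[OF assms(1), of x2] subdiff_le[OF assms(2), of x1]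
      subdiff_imp_finite[OF assms(1)] subdiff_imp_finite[OF assms(2)]
    unfolding c1_def c2_def by (metis ereal_less_eq(3) plus_ereal.simps(1))+
  then show ?thesis by (simp add: algebra_simps inner_diff_left inner_diff_right)
qed

lemma lsc_fun_eventually_gt:
  assumes "lsc_fun q" "c < q x"
  shows "\<forall>\<^sub>F y in nhds x. c < q y"
proof -
  have "q x \<le> Liminf (at x) q" using assms(1) unfolding lsc_fun_def by blast
  then show ?thesis using assms(2) by (simp add: eventually_nhds_conv_at le_Liminf_iff)
qed

lemma compact_attains_inf_lsc:
  fixes g :: "'a::topological_space \<Rightarrow> 'b::{complete_linorder,dense_linorder}"
  assumes "compact K" "K \<noteq> {}"
    and lsc: "\<And>w c. w \<in> K \<Longrightarrow> c < g w \<Longrightarrow> \<forall>\<^sub>F v in nhds w. c < g v"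
  shows "\<exists>w\<in>K. \<forall>v\<in>K. g w \<le> g v"
proof (rule ccontr)
  assume nomin: "\<not> ?thesis"
  define m where "m = (INF w\<in>K. g w)"
  have "m < g w" if "w \<in> K" for w
    using nomin that unfolding m_def by (metis INF_lower order_le_less)
  then have "\<exists>c S. m < c \<and> open S \<and> w \<in> S \<and> (\<forall>v\<in>S. c < g v)" if "w \<in> K" for w
    using that dense lsc unfolding eventually_nhds by metis
  then obtain c S where cS: "\<And>w. w \<in> K \<Longrightarrow> m < c w \<and> open (S w) \<and> w \<in> S w \<and> (\<forall>v\<in>S w. c w < g v)"
    by metis
  obtain W where W: "W \<subseteq> K" "finite W" "K \<subseteq> \<Union> (S ` W)"
    using compactE_image[OF \<open>compact K\<close>, of K S] cS by blast
  with \<open>K \<noteq> {}\<close> have "W \<noteq> {}" by auto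
  have "Min (c ` W) \<le> m"
    unfolding m_def
  proof (rule INF_greatest)
    fix v assume "v \<in> K"
    then obtain w where "w \<in> W" "v \<in> S w" using W by blast
    then have "Min (c ` W) \<le> c w" "c w < g v" using cS W by auto
    then show "Min (c ` W) \<le> g v" by simp
  qed
  moreover have "m < Min (c ` W)" using W \<open>W \<noteq> {}\<close> cS by (auto simp: Min_gr_iff)
  ultimately show False by simp
qed

definition prox_objective :: "real \<Rightarrow> 'a::real_inner \<Rightarrow> ('a \<Rightarrow> ereal) \<Rightarrow> 'a \<Rightarrow> 'a \<Rightarrow> ereal" where
  "prox_objective \<gamma> a q x w = ereal (\<gamma> / 2 * norm w ^ 2 + a \<bullet> w) + q (x + w)"

lemma u_gamma_eq_prox:
  "u_gamma \<gamma> f q x = (THE u. \<forall>w. prox_objective \<gamma> (f x) q x u \<le> prox_objective \<gamma> (f x) q x w)"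
  unfolding u_gamma_def prox_objective_def ..

lemma prox_objective_eventually_gt:
  assumes "proper_fun q" "lsc_fun q" "c < prox_objective \<gamma> a q x w"
  shows "\<forall>\<^sub>F v in nhds w. c < prox_objective \<gamma> a q x v"
proof (cases c)
  case (real c')
  define Qf where "Qf v = \<gamma> / 2 * norm v ^ 2 + a \<bullet> v" for v
  have "ereal (c' - Qf w) < q (x + w)"
    using assms(3) real unfolding prox_objective_def Qf_def
    by (cases "q (x + w)") (auto simp: algebra_simps)
  then obtain m where m: "ereal (c' - Qf w) < ereal m" "ereal m < q (x + w)"
    using ereal_dense2 by blast
  have "((\<lambda>v. v) \<longlongrightarrow> w) (nhds w)" by (rule filterlim_ident)
  then have "(Qf \<longlongrightarrow> Qf w) (nhds w)" "((\<lambda>v. x + v) \<longlongrightarrow> x + w) (nhds w)"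
    unfolding Qf_def by (auto intro!: tendsto_intros)
  then have "\<forall>\<^sub>F v in nhds w. c' - m < Qf v" "\<forall>\<^sub>F v in nhds w. ereal m < q (x + v)"
    using m(1) lsc_fun_eventually_gt[OF assms(2) m(2)]
    by (auto intro: order_tendstoD(1) dest: filterlim_iff[THEN iffD1, rule_format])
  then show ?thesis
  proof eventually_elim
    case (elim v)
    then have "ereal c' < ereal (Qf v) + ereal m" by simp
    also have "\<dots> \<le> ereal (Qf v) + q (x + v)" using elim(2) by (intro add_left_mono) simp
    finally show ?case unfolding prox_objective_def Qf_def real .
  qed
next
  case MInf
  then show ?thesis using assms(1) unfolding prox_objective_def proper_fun_def by auto
qed (use assms in simp)

lemma quadratic_pos_beyond:
  fixes r \<alpha> \<beta> \<gamma> :: real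
  assumes "\<gamma> > 0" "\<alpha> \<ge> 0" "\<beta> \<ge> 0" "r > 1 + 2 * (\<alpha> + \<beta>) / \<gamma>"
  shows "\<gamma> / 2 * r ^ 2 - \<alpha> * r - \<beta> > 0"
proof -
  have r: "r > 1" using assms by (smt (verit) divide_nonneg_pos)
  have "\<gamma> / 2 * r > \<alpha> + \<beta>" using assms by (simp add: field_simps)
  then have "\<gamma> / 2 * r * r > (\<alpha> + \<beta>) * r" using r by (intro mult_strict_right_mono) auto
  moreover have "\<beta> \<le> \<beta> * r" using r assms by (simp add: mult_le_cancel_left1)
  ultimately show ?thesis by (simp add: power2_eq_square algebra_simps)
qed

text \<open>The subgradient v0 gives an affine minorant of q, which the quadratic term dominates.\<close>
lemma prox_objective_coercive:
  assumes "\<gamma> > 0" "v0 \<in> subdiff q z0"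
  obtains R where "\<And>w. norm w > R \<Longrightarrow> ereal M < prox_objective \<gamma> a q x w"
proof -
  define c0 where "c0 = real_of_ereal (q z0)"
  define \<alpha> where "\<alpha> = norm a + norm v0"
  define \<beta> where "\<beta> = \<bar>c0\<bar> + norm v0 * norm (x - z0) + \<bar>M\<bar>"
  have "ereal M < prox_objective \<gamma> a q x w" if "norm w > 2 + 2 * (\<alpha> + \<beta>) / \<gamma>" for w
  proof -
    have "M < \<gamma> / 2 * norm w ^ 2 - \<alpha> * norm w - \<beta> + M"
      using quadratic_pos_beyond[OF assms(1), of \<alpha> \<beta> "norm w"] that
      unfolding \<alpha>_def \<beta>_def by simp
    also have "\<dots> \<le> \<gamma> / 2 * norm w ^ 2 + a \<bullet> w + (c0 + v0 \<bullet> (x + w - z0))"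
    proof -
      have "- (norm a * norm w) \<le> a \<bullet> w" using Cauchy_Schwarz_ineq2[of a w] by linarith
      moreover have "- (norm v0 * norm (w + (x - z0))) \<le> v0 \<bullet> (x + w - z0)"
        using Cauchy_Schwarz_ineq2[of v0 "w + (x - z0)"] by (simp add: algebra_simps)
      moreover have "norm v0 * norm (w + (x - z0)) \<le> norm v0 * norm w + norm v0 * norm (x - z0)"
        by (metis distrib_left mult_left_mono norm_ge_zero norm_triangle_ineq)
      ultimately show ?thesis unfolding \<alpha>_def \<beta>_def by (simp add: algebra_simps)
    qed
    finally have "ereal M < ereal (\<gamma> / 2 * norm w ^ 2 + a \<bullet> w) + ereal (c0 + v0 \<bullet> (x + w - z0))"
      by simp
    also have "\<dots> \<le> prox_objective \<gamma> a q x w"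
      using subdiff_le[OF assms(2), of "x + w"] subdiff_imp_finite[OF assms(2)]
      unfolding prox_objective_def c0_def by (metis add_left_mono plus_ereal.simps(1))
    finally show ?thesis .
  qed
  then show ?thesis using that by blast
qed

lemma prox_objective_has_min:
  fixes q :: "'a::euclidean_space \<Rightarrow> ereal"
  assumes "\<gamma> > 0" "proper_fun q" "lsc_fun q" "v0 \<in> subdiff q z0"
  shows "\<exists>u. \<forall>w. prox_objective \<gamma> a q x u \<le> prox_objective \<gamma> a q x w"
proof -
  let ?P = "prox_objective \<gamma> a q x"
  obtain p0 where "q p0 < \<infinity>" using assms(2) unfolding proper_fun_def by blast
  then obtain M where M: "?P (p0 - x) = ereal M"
    using assms(2) unfolding prox_objective_def proper_fun_def by (cases "q p0") auto
  obtain R where far: "\<And>w. norm w > R \<Longrightarrow> ereal M < ?P w"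
    using prox_objective_coercive[OF assms(1,4)] by blast
  have "p0 - x \<in> cball 0 R" using far[of "p0 - x"] M by force
  then obtain u where u: "u \<in> cball 0 R" "\<And>w. w \<in> cball 0 R \<Longrightarrow> ?P u \<le> ?P w"
    using compact_attains_inf_lsc[of "cball 0 R" ?P] prox_objective_eventually_gt[OF assms(2,3)]
    by (metis compact_cball empty_iff)
  have "?P u \<le> ?P w" for w
  proof (cases "w \<in> cball 0 R")
    case False
    then show ?thesis using u(2)[OF \<open>p0 - x \<in> cball 0 R\<close>] far[of w] M by simp
  qed (use u in blast)
  then show ?thesis by blast
qed

text \<open>Comparing u with u + t (y - (x + u)), where convexity bounds q along the segment.\<close>
lemma prox_objective_min_segment:
  assumes "convex_fun q"
    and min: "\<forall>w. prox_objective \<gamma> a q x u \<le> prox_objective \<gamma> a q x w"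
    and A: "q (x + u) = ereal A" and B: "q y = ereal B" and t: "0 < t" "t < 1"
  shows "A - B - (\<gamma> *\<^sub>R u + a) \<bullet> (y - (x + u)) \<le> t * (\<gamma> / 2 * norm (y - (x + u)) ^ 2)"
proof -
  define d where "d = y - (x + u)"
  have "x + (u + t *\<^sub>R d) = t *\<^sub>R y + (1 - t) *\<^sub>R (x + u)"
    unfolding d_def by (simp add: algebra_simps)
  then have "q (x + (u + t *\<^sub>R d)) \<le> ereal (t * B + (1 - t) * A)"
    using assms(1) t A B unfolding convex_fun_def by (metis times_ereal.simps(1) plus_ereal.simps(1))
  then have "prox_objective \<gamma> a q x u
      \<le> ereal (\<gamma> / 2 * norm (u + t *\<^sub>R d) ^ 2 + a \<bullet> (u + t *\<^sub>R d)) + ereal (t * B + (1 - t) * A)"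
    using min[rule_format, of "u + t *\<^sub>R d"] unfolding prox_objective_def
    by (meson add_left_mono order_trans)
  moreover have "norm (u + t *\<^sub>R d) ^ 2 = norm u ^ 2 + 2 * t * (u \<bullet> d) + t * t * norm d ^ 2"
    unfolding power2_norm_eq_inner
    by (simp add: inner_add_left inner_add_right inner_commute[of d u] algebra_simps)
  ultimately have "t * A \<le> t * ((\<gamma> * (u \<bullet> d) + a \<bullet> d) + t * (\<gamma> / 2 * norm d ^ 2) + B)"
    unfolding prox_objective_def A by (simp add: algebra_simps inner_add_right)
  then have "A \<le> (\<gamma> * (u \<bullet> d) + a \<bullet> d) + t * (\<gamma> / 2 * norm d ^ 2) + B"
    using t by (simp add: mult_le_cancel_left_pos)
  then show ?thesis unfolding d_def[symmetric] by (simp add: inner_add_left algebra_simps)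
qed

lemma prox_objective_min_imp_subdiff:
  assumes "proper_fun q" "convex_fun q"
    and min: "\<forall>w. prox_objective \<gamma> a q x u \<le> prox_objective \<gamma> a q x w"
  shows "- \<gamma> *\<^sub>R u - a \<in> subdiff q (x + u)"
proof -
  obtain p0 where "q p0 < \<infinity>" using assms(1) unfolding proper_fun_def by blast
  then have "prox_objective \<gamma> a q x (p0 - x) < \<infinity>" unfolding prox_objective_def by simp
  then have "prox_objective \<gamma> a q x u < \<infinity>" using min le_less_trans by blast
  then obtain A where A: "q (x + u) = ereal A"
    using assms(1) unfolding prox_objective_def proper_fun_def by (cases "q (x + u)") auto
  have "A + (- \<gamma> *\<^sub>R u - a) \<bullet> (y - (x + u)) \<le> B" if B: "q y = ereal B" for y B
  proof -
    let ?c = "\<gamma> / 2 * norm (y - (x + u)) ^ 2"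
    have "\<forall>\<^sub>F t in at_right 0. A - B - (\<gamma> *\<^sub>R u + a) \<bullet> (y - (x + u)) \<le> t * ?c"
      using prox_objective_min_segment[OF assms(2) min A B]
      by (auto simp: eventually_at_right_field intro: exI[of _ 1])
    moreover have "((\<lambda>t. t * ?c) \<longlongrightarrow> 0 * ?c) (at_right 0)"
      by (intro tendsto_intros)
    ultimately have "A - B - (\<gamma> *\<^sub>R u + a) \<bullet> (y - (x + u)) \<le> 0"
      by (intro tendsto_lowerbound[of _ _ "at_right 0"]) auto
    then show ?thesis by (simp add: inner_diff_left algebra_simps)
  qed
  then have "q (x + u) + ereal ((- \<gamma> *\<^sub>R u - a) \<bullet> (y - (x + u))) \<le> q y" for y
    using assms(1) A unfolding proper_fun_def by (cases "q y") auto
  then show ?thesis unfolding subdiff_def using A by simp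
qed

lemma prox_objective_min_unique:
  assumes "\<gamma> > 0" "proper_fun q" "convex_fun q"
    and "\<forall>w. prox_objective \<gamma> a q x u1 \<le> prox_objective \<gamma> a q x w"
    and "\<forall>w. prox_objective \<gamma> a q x u2 \<le> prox_objective \<gamma> a q x w"
  shows "u1 = u2"
proof -
  have "((- \<gamma> *\<^sub>R u1 - a) - (- \<gamma> *\<^sub>R u2 - a)) \<bullet> ((x + u1) - (x + u2)) \<ge> 0"
    using subdiff_monotone prox_objective_min_imp_subdiff assms(2-5) by blast
  then have "\<gamma> * ((u1 - u2) \<bullet> (u1 - u2)) \<le> 0" by (simp add: algebra_simps)
  then have "(u1 - u2) \<bullet> (u1 - u2) \<le> 0" using assms(1) by (simp add: mult_le_0_iff)
  then show ?thesis by (metis inner_eq_zero_iff inner_ge_zero order_antisym eq_iff_diff_eq_0)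
qed

lemma u_gamma_subdiff:
  fixes q :: "'a::euclidean_space \<Rightarrow> ereal"
  assumes "\<gamma> > 0" "proper_fun q" "convex_fun q" "lsc_fun q" "v0 \<in> subdiff q z0"
  shows "- \<gamma> *\<^sub>R u_gamma \<gamma> f q x - f x \<in> subdiff q (x + u_gamma \<gamma> f q x)"
proof -
  obtain u where u: "\<forall>w. prox_objective \<gamma> (f x) q x u \<le> prox_objective \<gamma> (f x) q x w"
    using prox_objective_has_min[OF assms(1,2,4,5)] by blast
  then have "u_gamma \<gamma> f q x = u"
    unfolding u_gamma_eq_prox
    by (rule the_equality) (use u prox_objective_min_unique[OF assms(1-3) _ u] in auto)
  then show ?thesis using prox_objective_min_imp_subdiff[OF assms(2,3) u] by simp
qed

lemma quadratic_le_imp_le: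
  fixes \<gamma> L n e :: real
  assumes "\<gamma> > 0" "L \<ge> 0" "e \<ge> 0" "\<gamma> * (n * n) \<le> \<gamma> * (n * e) + L * e * (e + n)"
  shows "n \<le> (1 + 2 * L / \<gamma>) * e"
proof (cases "n \<le> e")
  case True
  moreover have "0 \<le> 2 * L / \<gamma> * e" using assms(1-3) by simp
  ultimately show ?thesis by (simp add: algebra_simps)
next
  case False
  then have "L * e * (e + n) \<le> L * e * (2 * n)"
    using assms(2,3) by (intro mult_left_mono) auto
  with assms(4) have "n * (\<gamma> * n) \<le> n * (\<gamma> * e + 2 * L * e)"
    by (simp add: algebra_simps)
  moreover have "n > 0" using False assms(3) by linarith
  ultimately have "\<gamma> * n \<le> \<gamma> * e + 2 * L * e"
    by (simp add: mult_le_cancel_left_pos)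
  then show ?thesis using assms(1) by (simp add: field_simps)
qed

lemma u_gamma_bound:
  fixes q :: "'a::euclidean_space \<Rightarrow> ereal"
  assumes "\<gamma> > 0" "proper_fun q" "convex_fun q" "lsc_fun q" "- f xb \<in> subdiff q xb"
    and "L \<ge> 0" "norm (f x - f xb) \<le> L * norm (x - xb)"
  shows "norm (u_gamma \<gamma> f q x) \<le> (1 + 2 * L / \<gamma>) * norm (x - xb)"
proof -
  define u e where "u = u_gamma \<gamma> f q x" and "e = x - xb"
  have "((- \<gamma> *\<^sub>R u - f x) - (- f xb)) \<bullet> ((x + u) - xb) \<ge> 0"
    using subdiff_monotone[OF u_gamma_subdiff[OF assms(1-5)] assms(5)] unfolding u_def .
  then have "\<gamma> * (u \<bullet> u) \<le> - \<gamma> * (u \<bullet> e) - (f x - f xb) \<bullet> (e + u)"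
    unfolding e_def by (simp add: algebra_simps inner_diff_left inner_add_right inner_commute)
  also have "\<dots> \<le> \<gamma> * (norm u * norm e) + L * norm e * (norm e + norm u)"
  proof -
    have "- (u \<bullet> e) \<le> norm u * norm e" using Cauchy_Schwarz_ineq2[of u e] by linarith
    then have "- \<gamma> * (u \<bullet> e) \<le> \<gamma> * (norm u * norm e)"
      using mult_left_mono[of _ _ \<gamma>] assms(1) by fastforce
    moreover have "- ((f x - f xb) \<bullet> (e + u)) \<le> norm (f x - f xb) * norm (e + u)"
      using Cauchy_Schwarz_ineq2[of "f x - f xb" "e + u"] by linarith
    moreover have "norm (f x - f xb) * norm (e + u) \<le> L * norm e * (norm e + norm u)"
      using assms(6,7) norm_triangle_ineq[of e u] unfolding e_def by (intro mult_mono) auto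
    ultimately show ?thesis by linarith
  qed
  finally have "\<gamma> * (norm u * norm u) \<le> \<gamma> * (norm u * norm e) + L * norm e * (norm e + norm u)"
    by (simp add: power2_norm_eq_inner[symmetric] power2_eq_square)
  then show ?thesis
    unfolding u_def e_def using quadratic_le_imp_le[OF assms(1,6)] by simp
qed

definition prox_graph_point :: "real \<Rightarrow> ('a::real_inner \<Rightarrow> 'a) \<Rightarrow> ('a \<Rightarrow> ereal) \<Rightarrow> 'a \<Rightarrow> 'a \<times> 'a" where
  "prox_graph_point \<gamma> f q x = (x + u_gamma \<gamma> f q x, - \<gamma> *\<^sub>R u_gamma \<gamma> f q x - f x)"

lemma prox_graph_point_in_gph:
  fixes q :: "'a::euclidean_space \<Rightarrow> ereal"
  assumes "\<gamma> > 0" "proper_fun q" "convex_fun q" "lsc_fun q" "v0 \<in> subdiff q z0"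
  shows "prox_graph_point \<gamma> f q x \<in> gph (subdiff q)"
  using u_gamma_subdiff[OF assms] unfolding prox_graph_point_def gph_def by simp

lemma prox_graph_point_calm:
  fixes q :: "'a::euclidean_space \<Rightarrow> ereal"
  assumes "\<gamma> > 0" "proper_fun q" "convex_fun q" "lsc_fun q" "- f xb \<in> subdiff q xb"
    and "(f has_derivative L) (at xb)"
  obtains C where "C > 0"
    "\<forall>\<^sub>F x in nhds xb. norm (prox_graph_point \<gamma> f q x - (xb, - f xb)) \<le> C * norm (x - xb)"
proof -
  let ?u = "u_gamma \<gamma> f q"
  obtain L where L: "L \<ge> 0" "\<forall>\<^sub>F x in nhds xb. norm (f x - f xb) \<le> L * norm (x - xb)"
    using has_derivative_imp_calm[OF assms(6)] by blast
  define C where "C = 1 + (1 + \<gamma>) * (1 + 2 * L / \<gamma>) + L"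
  have "\<forall>\<^sub>F x in nhds xb. norm (prox_graph_point \<gamma> f q x - (xb, - f xb)) \<le> C * norm (x - xb)"
    using L(2)
  proof eventually_elim
    case (elim x)
    have u: "norm (?u x) \<le> (1 + 2 * L / \<gamma>) * norm (x - xb)"
      by (rule u_gamma_bound[OF assms(1-5) L(1) elim])
    have "prox_graph_point \<gamma> f q x - (xb, - f xb) = ((x - xb) + ?u x, - (\<gamma> *\<^sub>R ?u x + (f x - f xb)))"
      unfolding prox_graph_point_def by (simp add: algebra_simps)
    then have "norm (prox_graph_point \<gamma> f q x - (xb, - f xb))
        \<le> norm ((x - xb) + ?u x) + norm (\<gamma> *\<^sub>R ?u x + (f x - f xb))"
      using norm_Pair_le[of "(x - xb) + ?u x" "- (\<gamma> *\<^sub>R ?u x + (f x - f xb))"]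
      by (simp only: norm_minus_cancel)
    also have "\<dots> \<le> norm (x - xb) + (1 + \<gamma>) * norm (?u x) + L * norm (x - xb)"
      using norm_triangle_ineq[of "x - xb" "?u x"] norm_triangle_ineq[of "\<gamma> *\<^sub>R ?u x" "f x - f xb"]
        elim \<open>\<gamma> > 0\<close> by (simp add: algebra_simps)
    also have "\<dots> \<le> norm (x - xb) + (1 + \<gamma>) * ((1 + 2 * L / \<gamma>) * norm (x - xb)) + L * norm (x - xb)"
      using u \<open>\<gamma> > 0\<close> by (simp add: mult_left_mono)
    also have "\<dots> = C * norm (x - xb)"
      unfolding C_def by (simp add: algebra_simps)
    finally show ?case .
  qed
  moreover have "C > 0" using L(1) \<open>\<gamma> > 0\<close> unfolding C_def by (simp add: add_pos_nonneg)
  ultimately show ?thesis using that by blast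
qed

section \<open>Normal cones and semismoothness\<close>

lemma regular_normal_cone_scaleR:
  "s \<in> regular_normal_cone C z \<Longrightarrow> c \<ge> 0 \<Longrightarrow> c *\<^sub>R s \<in> regular_normal_cone C z"
  unfolding regular_normal_cone_def polar_def by (auto simp: mult_nonneg_nonpos)

lemma limiting_normal_cone_eventually_le:
  fixes g :: "'a::real_inner \<Rightarrow> 'a \<Rightarrow> real"
  assumes g: "continuous_on UNIV (\<lambda>p. g (fst p) (snd p))"
    and reg: "\<forall>\<^sub>F z in nhds z0. z \<in> C \<longrightarrow> (\<forall>r\<in>regular_normal_cone C z. g z r \<le> 0)"
  shows "\<forall>\<^sub>F z in nhds z0. \<forall>s\<in>limiting_normal_cone C z. g z s \<le> 0"
proof -
  obtain V where V: "open V" "z0 \<in> V"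
    and regV: "\<And>z r. z \<in> V \<Longrightarrow> z \<in> C \<Longrightarrow> r \<in> regular_normal_cone C z \<Longrightarrow> g z r \<le> 0"
    using reg unfolding eventually_nhds by blast
  have "g z s \<le> 0" if "z \<in> V" "s \<in> limiting_normal_cone C z" for z s
  proof -
    from that(2) obtain t ws ss where seq: "t \<longlonglongrightarrow> 0" "ws \<longlonglongrightarrow> 0" "ss \<longlonglongrightarrow> s"
      "\<And>k. z + t k *\<^sub>R ws k \<in> C" "\<And>k. ss k \<in> regular_normal_cone C (z + t k *\<^sub>R ws k)"
      unfolding limiting_normal_cone_def dir_normal_cone_def by (auto simp del: add_0)
    have "(\<lambda>k. z + t k *\<^sub>R ws k) \<longlonglongrightarrow> z + 0 *\<^sub>R 0"
      by (intro tendsto_intros seq)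
    then have zk: "(\<lambda>k. z + t k *\<^sub>R ws k) \<longlonglongrightarrow> z" by simp
    then have "\<forall>\<^sub>F k in sequentially. z + t k *\<^sub>R ws k \<in> V"
      using V(1) \<open>z \<in> V\<close> by (rule topological_tendstoD)
    then have "\<forall>\<^sub>F k in sequentially. g (z + t k *\<^sub>R ws k) (ss k) \<le> 0"
      by eventually_elim (use regV seq in blast)
    moreover have "(\<lambda>k. g (z + t k *\<^sub>R ws k) (ss k)) \<longlonglongrightarrow> g z s"
      using continuous_on_tendsto_compose[OF g tendsto_Pair[OF zk seq(3)]] by simp
    ultimately show ?thesis by (intro tendsto_upperbound) auto
  qed
  then show ?thesis unfolding eventually_nhds using V by blast
qed

lemma dir_normal_cone_limit:
  fixes C :: "'a::euclidean_space set"
  assumes "\<And>k. zs k \<in> C" "zs \<longlonglongrightarrow> zb" "\<And>k. zs k \<noteq> zb"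
    and "\<And>k. rs k \<in> regular_normal_cone C (zs k)" "\<And>k. rs k \<noteq> 0"
  obtains r w n where "strict_mono r"
    "(\<lambda>k. (1 / norm (zs (r k) - zb)) *\<^sub>R (zs (r k) - zb)) \<longlonglongrightarrow> w"
    "(\<lambda>k. (1 / norm (rs (r k))) *\<^sub>R rs (r k)) \<longlonglongrightarrow> n"
    "n \<in> dir_normal_cone C zb w"
proof -
  define t where "t k = norm (zs k - zb)" for k
  define w where "w k = (1 / t k) *\<^sub>R (zs k - zb)" for k
  define n where "n k = (1 / norm (rs k)) *\<^sub>R rs k" for k
  have t: "t k > 0" for k using assms(3) unfolding t_def by simp
  have zk: "zb + t k *\<^sub>R w k = zs k" for k using t[of k] unfolding w_def by simp
  have "norm (w k) = 1" "norm (n k) = 1" for k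
    using t[of k] assms(5)[of k] unfolding w_def n_def t_def by simp_all
  then have "bounded (range (\<lambda>k. (w k, n k)))"
    by (auto simp: bounded_iff intro!: exI[of _ 2] order_trans[OF norm_Pair_le])
  then obtain l r where r: "strict_mono r" "((\<lambda>k. (w k, n k)) \<circ> r) \<longlonglongrightarrow> l"
    using bounded_imp_convergent_subsequence by blast
  have wl: "(w \<circ> r) \<longlonglongrightarrow> fst l" and nl: "(n \<circ> r) \<longlonglongrightarrow> snd l"
    using tendsto_fst[OF r(2)] tendsto_snd[OF r(2)] by (simp_all add: o_def)
  have "t \<longlonglongrightarrow> 0"
    using tendsto_norm[OF LIM_zero[OF assms(2)]] unfolding t_def by simp
  then have "(t \<circ> r) \<longlonglongrightarrow> 0" using r(1) by (rule LIMSEQ_subseq_LIMSEQ)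
  moreover have "n k \<in> regular_normal_cone C (zb + t k *\<^sub>R w k)" for k
    unfolding zk n_def by (rule regular_normal_cone_scaleR[OF assms(4)]) simp
  ultimately have "snd l \<in> dir_normal_cone C zb (fst l)"
    unfolding dir_normal_cone_def using t assms(1) zk wl nl
    by (intro CollectI exI[of _ "t \<circ> r"] exI[of _ "w \<circ> r"] exI[of _ "n \<circ> r"]) auto
  with r(1) wl nl show ?thesis
    using that[of r "fst l" "snd l"] unfolding w_def n_def t_def by (simp add: o_def)
qed

lemma semismooth_regular_normal_estimate:
  fixes C :: "'a::euclidean_space set"
  assumes ss: "\<And>w s. s \<in> dir_normal_cone C zb w \<Longrightarrow> s \<bullet> w = 0" and "\<epsilon> > 0"
  shows "\<forall>\<^sub>F z in nhds zb. z \<in> C \<longrightarrow>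
           (\<forall>r\<in>regular_normal_cone C z. \<bar>r \<bullet> (z - zb)\<bar> \<le> \<epsilon> * norm r * norm (z - zb))"
proof (rule ccontr)
  assume "\<not> ?thesis"
  then have "\<exists>z r. z \<in> C \<and> dist z zb < 1 / Suc k \<and> r \<in> regular_normal_cone C z \<and>
            \<bar>r \<bullet> (z - zb)\<bar> > \<epsilon> * norm r * norm (z - zb)" for k
    unfolding eventually_nhds_metric by (metis not_le of_nat_0_less_iff zero_less_Suc zero_less_divide_1_iff)
  then obtain zs rs where h: "\<And>k. zs k \<in> C" "\<And>k. dist (zs k) zb < 1 / Suc k"
    "\<And>k. rs k \<in> regular_normal_cone C (zs k)"
    "\<And>k. \<bar>rs k \<bullet> (zs k - zb)\<bar> > \<epsilon> * norm (rs k) * norm (zs k - zb)"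
    by metis
  have nz: "zs k \<noteq> zb" "rs k \<noteq> 0" for k using h(4)[of k] by auto
  have "zs \<longlonglongrightarrow> zb"
    using h(2) LIMSEQ_inverse_real_of_nat
    by (intro tendsto_sandwich[of "\<lambda>_. 0" "\<lambda>k. dist (zs k) zb" _ "\<lambda>k. 1 / Suc k", THEN tendsto_dist_iff[THEN iffD2]])
       (auto simp: less_imp_le inverse_eq_divide)
  then obtain r w n where "strict_mono r"
    and wl: "(\<lambda>k. (1 / norm (zs (r k) - zb)) *\<^sub>R (zs (r k) - zb)) \<longlonglongrightarrow> w"
    and nl: "(\<lambda>k. (1 / norm (rs (r k))) *\<^sub>R rs (r k)) \<longlonglongrightarrow> n"
    and "n \<in> dir_normal_cone C zb w"
    using dir_normal_cone_limit[where zs = zs and rs = rs and C = C and zb = zb] h(1,3) nz by blast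
  then have "(\<lambda>k. \<bar>((1 / norm (rs (r k))) *\<^sub>R rs (r k)) \<bullet> ((1 / norm (zs (r k) - zb)) *\<^sub>R (zs (r k) - zb))\<bar>)
      \<longlonglongrightarrow> 0"
    using tendsto_rabs[OF tendsto_inner[OF nl wl]] ss by simp
  moreover have "\<epsilon> < \<bar>((1 / norm (rs k)) *\<^sub>R rs k) \<bullet> ((1 / norm (zs k - zb)) *\<^sub>R (zs k - zb))\<bar>" for k
  proof -
    have "((1 / norm (rs k)) *\<^sub>R rs k) \<bullet> ((1 / norm (zs k - zb)) *\<^sub>R (zs k - zb))
        = (rs k \<bullet> (zs k - zb)) / (norm (rs k) * norm (zs k - zb))"
      by simp
    moreover have "norm (rs k) * norm (zs k - zb) > 0" using nz[of k] by simp
    ultimately show ?thesis using h(4)[of k] by (simp add: abs_div pos_less_divide_eq ac_simps)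
  qed
  ultimately have "\<epsilon> \<le> 0"
    by (intro tendsto_lowerbound[of _ _ sequentially]) (auto intro: less_imp_le always_eventually)
  with \<open>\<epsilon> > 0\<close> show False by simp
qed

lemma semismooth_limiting_normal_estimate:
  fixes C :: "'a::euclidean_space set"
  assumes "\<And>w s. s \<in> dir_normal_cone C zb w \<Longrightarrow> s \<bullet> w = 0" and "\<epsilon> > 0"
  shows "\<forall>\<^sub>F z in nhds zb. \<forall>s\<in>limiting_normal_cone C z. \<bar>s \<bullet> (z - zb)\<bar> \<le> \<epsilon> * norm s * norm (z - zb)"
proof -
  have "\<forall>\<^sub>F z in nhds zb. \<forall>s\<in>limiting_normal_cone C z.
          \<bar>s \<bullet> (z - zb)\<bar> - \<epsilon> * norm s * norm (z - zb) \<le> 0"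
    using semismooth_regular_normal_estimate[OF assms]
    by (intro limiting_normal_cone_eventually_le) (auto intro!: continuous_intros elim!: eventually_mono)
  then show ?thesis by eventually_elim simp
qed

lemma semismooth_star_graph_estimate:
  fixes F :: "'a::euclidean_space \<Rightarrow> 'b::euclidean_space set"
  assumes "semismooth_star F x y" "\<epsilon> > 0"
  shows "\<forall>\<^sub>F z in nhds (x, y). \<forall>s\<in>limiting_normal_cone (gph F) z.
           \<bar>s \<bullet> (z - (x, y))\<bar> \<le> \<epsilon> * norm s * norm (z - (x, y))"
proof (rule semismooth_limiting_normal_estimate[OF _ assms(2)])
  fix w s assume "s \<in> dir_normal_cone (gph F) (x, y) w"
  then have "fst s \<in> dir_coderiv F x y (fst w) (snd w) (- snd s)"
    unfolding dir_coderiv_def by simp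
  then show "s \<bullet> w = 0"
    using assms(1) unfolding semismooth_star_def by (force simp: inner_prod_def)
qed

section \<open>Metric regularity and coderivatives\<close>

lemma metrically_regular_ray_preimages:
  assumes "metrically_regular (\<lambda>x. {f x + v | v. v \<in> Q x}) xb 0"
  obtains \<kappa> \<delta> where "\<kappa> \<ge> 0" "\<delta> > 0"
    "\<And>x y d t. y \<in> Q x \<Longrightarrow> norm (x - xb) < \<delta> \<Longrightarrow> norm (y + f x) + t * norm d < \<delta> \<Longrightarrow> t > 0 \<Longrightarrow>
       \<exists>x'. y + f x + t *\<^sub>R d - f x' \<in> Q x' \<and> dist x x' < \<kappa> * (t * norm d) + t * t"
proof -
  let ?H = "\<lambda>x. {f x + v | v. v \<in> Q x}"
  obtain \<kappa> \<delta> where kd: "\<kappa> \<ge> 0" "\<delta> > 0"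
    and mr: "\<And>x Y. dist x xb < \<delta> \<Longrightarrow> dist Y 0 < \<delta> \<Longrightarrow> ?H x \<noteq> {} \<Longrightarrow>
        inv_map ?H Y \<noteq> {} \<and> infdist x (inv_map ?H Y) \<le> \<kappa> * infdist Y (?H x)"
    using assms unfolding metrically_regular_def by blast
  have "\<exists>x'. y + f x + t *\<^sub>R d - f x' \<in> Q x' \<and> dist x x' < \<kappa> * (t * norm d) + t * t"
    if "y \<in> Q x" "norm (x - xb) < \<delta>" "norm (y + f x) + t * norm d < \<delta>" "t > 0" for x y d t
  proof -
    let ?Y = "y + f x + t *\<^sub>R d"
    have Y: "y + f x \<in> ?H x" using that(1) by (auto simp: add.commute)
    have "norm ?Y \<le> norm (y + f x) + t * norm d"
      using norm_triangle_ineq[of "y + f x" "t *\<^sub>R d"] that(4) by simp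
    then have "dist ?Y 0 < \<delta>" using that(3) by simp
    then have ne: "inv_map ?H ?Y \<noteq> {}"
      and inf: "infdist x (inv_map ?H ?Y) \<le> \<kappa> * infdist ?Y (?H x)"
      using mr[of x ?Y] Y that(2) by (auto simp: dist_norm)
    have "\<kappa> * infdist ?Y (?H x) \<le> \<kappa> * (t * norm d)"
      using infdist_le[OF Y, of ?Y] kd(1) that(4) by (intro mult_left_mono) (auto simp: dist_norm)
    with inf have "(INF x'\<in>inv_map ?H ?Y. dist x x') < \<kappa> * (t * norm d) + t * t"
      using ne mult_pos_pos[OF that(4) that(4)] by (simp add: infdist_notempty)
    then obtain x' where "x' \<in> inv_map ?H ?Y" "dist x x' < \<kappa> * (t * norm d) + t * t"
      using ne by (subst (asm) cINF_less_iff) auto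
    moreover from this(1) obtain v where "?Y = f x' + v" "v \<in> Q x'" unfolding inv_map_def by blast
    ultimately show ?thesis by (metis add_diff_cancel_left')
  qed
  with kd show ?thesis using that by blast
qed

lemma tangent_cone_gph_of_sum:
  assumes fd: "(f has_derivative L) (at x)"
    and t: "\<And>k. t k > 0" "t \<longlonglongrightarrow> 0" and h: "h \<longlonglongrightarrow> hl"
    and Q: "\<And>k. y + t k *\<^sub>R d - (f (x + t k *\<^sub>R h k) - f x) \<in> Q (x + t k *\<^sub>R h k)"
  shows "(hl, d - L hl) \<in> tangent_cone (gph Q) (x, y)"
proof -
  define ws where "ws k = (h k, d - (1 / t k) *\<^sub>R (f (x + t k *\<^sub>R h k) - f x))" for k
  have "ws \<longlonglongrightarrow> (hl, d - L hl)"
    unfolding ws_def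
    by (intro tendsto_Pair h tendsto_diff tendsto_const has_derivative_difference_quotient_seq[OF fd t h])
  moreover have "(x, y) + t k *\<^sub>R ws k \<in> gph Q" for k
    using Q[of k] t(1)[of k] unfolding ws_def gph_def by (simp add: algebra_simps)
  ultimately show ?thesis
    unfolding tangent_cone_def using t by blast
qed

lemma tangent_cone_gph_of_sum_bounded:
  fixes f :: "'a::euclidean_space \<Rightarrow> 'b::real_normed_vector"
  assumes fd: "(f has_derivative L) (at x)" and t: "\<And>k. t k > 0" "t \<longlonglongrightarrow> 0"
    and xs: "\<And>k. y + f x + t k *\<^sub>R d - f (xs k) \<in> Q (xs k)" "\<And>k. dist x (xs k) < t k * (c + t k)"
  shows "\<exists>h. norm h \<le> c \<and> (h, d - L h) \<in> tangent_cone (gph Q) (x, y)"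
proof -
  define h where "h k = (1 / t k) *\<^sub>R (xs k - x)" for k
  have xs_eq: "xs k = x + t k *\<^sub>R h k" for k unfolding h_def using t(1)[of k] by simp
  have h_bound: "norm (h k) \<le> c + t k" for k
  proof -
    have "t k * norm (h k) = dist x (xs k)"
      unfolding h_def using t(1)[of k] by (simp add: dist_norm norm_minus_commute)
    then show ?thesis
      using xs(2)[of k] t(1)[of k] mult_less_cancel_left_pos[of "t k" "norm (h k)" "c + t k"] by simp
  qed
  obtain T where "\<And>k. t k \<le> T"
    using convergent_imp_bounded[OF t(2)] unfolding bounded_iff by (metis abs_le_D1 real_norm_def rangeI)
  then have "norm (h k) \<le> c + T" for k
    using h_bound[of k] by (meson add_left_mono order_trans)
  then have "bounded (range h)" unfolding bounded_iff by blast
  then obtain hl r where r: "strict_mono r" "(h \<circ> r) \<longlonglongrightarrow> hl"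
    using bounded_imp_convergent_subsequence by blast
  have tr: "(t \<circ> r) \<longlonglongrightarrow> 0" using t(2) r(1) by (rule LIMSEQ_subseq_LIMSEQ)
  have "(\<lambda>k. c + (t \<circ> r) k) \<longlonglongrightarrow> c + 0"
    by (intro tendsto_add tendsto_const tr)
  then have "norm hl \<le> c + 0"
    using h_bound by (intro tendsto_le[OF _ _ tendsto_norm[OF r(2)]]) (auto intro: always_eventually)
  moreover have "(hl, d - L hl) \<in> tangent_cone (gph Q) (x, y)"
    using xs(1) unfolding xs_eq
    by (intro tangent_cone_gph_of_sum[OF fd _ tr r(2)]) (auto simp: t algebra_simps)
  ultimately show ?thesis by auto
qed

lemma metrically_regular_tangent_directions:
  fixes f :: "'a::euclidean_space \<Rightarrow> 'b::real_normed_vector"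
  assumes fd: "\<And>x. (f has_derivative Df x) (at x)"
    and mr: "metrically_regular (\<lambda>x. {f x + v | v. v \<in> Q x}) xb 0"
  obtains \<kappa> \<delta> where "\<kappa> \<ge> 0" "\<delta> > 0"
    "\<And>x y d. y \<in> Q x \<Longrightarrow> norm (x - xb) < \<delta> \<Longrightarrow> norm (y + f x) < \<delta> \<Longrightarrow>
       \<exists>h. norm h \<le> \<kappa> * norm d \<and> (h, d - Df x h) \<in> tangent_cone (gph Q) (x, y)"
proof -
  obtain \<kappa> \<delta> where kd: "\<kappa> \<ge> 0" "\<delta> > 0"
    and ray: "\<And>x y d t. y \<in> Q x \<Longrightarrow> norm (x - xb) < \<delta> \<Longrightarrow> norm (y + f x) + t * norm d < \<delta> \<Longrightarrow> t > 0 \<Longrightarrow>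
       \<exists>x'. y + f x + t *\<^sub>R d - f x' \<in> Q x' \<and> dist x x' < \<kappa> * (t * norm d) + t * t"
    using metrically_regular_ray_preimages[OF mr] by blast
  have "\<exists>h. norm h \<le> \<kappa> * norm d \<and> (h, d - Df x h) \<in> tangent_cone (gph Q) (x, y)"
    if y: "y \<in> Q x" "norm (x - xb) < \<delta>" "norm (y + f x) < \<delta>" for x y d
  proof -
    define \<tau> where "\<tau> = (\<delta> - norm (y + f x)) / (norm d + 1)"
    define t where "t k = \<tau> / Suc k" for k
    have "norm d + 1 > 0" by (simp add: add_nonneg_pos)
    then have \<tau>: "\<tau> > 0" "norm (y + f x) + \<tau> * norm d < \<delta>"
      using y(3) unfolding \<tau>_def by (simp_all add: field_simps)
    then have t: "t k > 0" "t k \<le> \<tau>" for k unfolding t_def by (simp_all add: divide_le_eq)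
    have "t \<longlonglongrightarrow> 0"
      unfolding t_def divide_inverse by (intro tendsto_mult_right_zero LIMSEQ_inverse_real_of_nat)
    have "norm (y + f x) + t k * norm d < \<delta>" for k
      using \<tau>(2) t[of k] by (smt (verit) mult_right_mono norm_ge_zero)
    then have "\<exists>x'. y + f x + t k *\<^sub>R d - f x' \<in> Q x' \<and> dist x x' < t k * (\<kappa> * norm d + t k)" for k
      using ray[OF y(1,2) _ t(1)] by (simp add: algebra_simps)
    then obtain xs where "\<And>k. y + f x + t k *\<^sub>R d - f (xs k) \<in> Q (xs k)"
      "\<And>k. dist x (xs k) < t k * (\<kappa> * norm d + t k)"
      by metis
    then show ?thesis by (rule tangent_cone_gph_of_sum_bounded[OF fd t(1) \<open>t \<longlonglongrightarrow> 0\<close>])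
  qed
  with kd show ?thesis using that by blast
qed

lemma metrically_regular_regular_normal_bound:
  fixes f :: "real^'n \<Rightarrow> real^'m" and Df :: "real^'n \<Rightarrow> real^'n^'m"
  assumes fd: "\<And>x. (f has_derivative (\<lambda>h. Df x *v h)) (at x)"
    and mr: "metrically_regular (\<lambda>x. {f x + v | v. v \<in> Q x}) xb 0"
  obtains \<kappa> \<delta> where "\<kappa> \<ge> 0" "\<delta> > 0"
    "\<And>x y r. y \<in> Q x \<Longrightarrow> norm (x - xb) < \<delta> \<Longrightarrow> norm (y + f x) < \<delta> \<Longrightarrow>
       r \<in> regular_normal_cone (gph Q) (x, y) \<Longrightarrow>
       norm (snd r) \<le> \<kappa> * norm (fst r - transpose (Df x) *v snd r)"
proof -
  obtain \<kappa> \<delta> where kd: "\<kappa> \<ge> 0" "\<delta> > 0"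
    and tang: "\<And>x y d. y \<in> Q x \<Longrightarrow> norm (x - xb) < \<delta> \<Longrightarrow> norm (y + f x) < \<delta> \<Longrightarrow>
       \<exists>h. norm h \<le> \<kappa> * norm d \<and> (h, d - Df x *v h) \<in> tangent_cone (gph Q) (x, y)"
    using metrically_regular_tangent_directions[OF fd mr] by blast
  have "norm (snd r) \<le> \<kappa> * norm (fst r - transpose (Df x) *v snd r)"
    if hyp: "y \<in> Q x" "norm (x - xb) < \<delta>" "norm (y + f x) < \<delta>"
      "r \<in> regular_normal_cone (gph Q) (x, y)" for x y r
  proof -
    define a b where "a = snd r" and "b = fst r - transpose (Df x) *v snd r"
    obtain h where h: "norm h \<le> \<kappa> * norm a" "(h, a - Df x *v h) \<in> tangent_cone (gph Q) (x, y)"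
      using tang[OF hyp(1-3)] by blast
    have "r \<bullet> (h, a - Df x *v h) \<le> 0"
      using hyp(4) h(2) unfolding regular_normal_cone_def polar_def by blast
    then have "a \<bullet> a \<le> - (b \<bullet> h)"
      unfolding a_def b_def
      by (simp add: inner_prod_def inner_diff_left inner_diff_right dot_lmul_matrix[symmetric])
    also have "\<dots> \<le> norm b * norm h"
      using Cauchy_Schwarz_ineq2[of b h] by linarith
    also have "\<dots> \<le> norm b * (\<kappa> * norm a)"
      using h(1) by (simp add: mult_left_mono)
    finally have "norm a * norm a \<le> norm a * (\<kappa> * norm b)"
      by (simp add: power2_norm_eq_inner[symmetric] power2_eq_square algebra_simps)
    then show ?thesis
      unfolding a_def b_def by (cases "snd r = 0") (auto simp: kd(1))
  qed
  with kd(1,2) show ?thesis using that by blast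
qed

lemma eventually_nhds_graph_point:
  assumes "isCont f xb" "\<forall>\<^sub>F x in nhds xb. P x" "\<delta> > 0"
  shows "\<forall>\<^sub>F z in nhds (xb, - f xb). P (fst z) \<and> norm (snd z + f (fst z)) < \<delta>"
proof -
  have "((\<lambda>z. z) \<longlongrightarrow> (xb, - f xb)) (nhds (xb, - f xb))" by (rule filterlim_ident)
  then have fz: "((\<lambda>z. fst z) \<longlongrightarrow> xb) (nhds (xb, - f xb))"
    and sz: "((\<lambda>z. snd z) \<longlongrightarrow> - f xb) (nhds (xb, - f xb))"
    by (auto dest: tendsto_fst tendsto_snd)
  then have "((\<lambda>z. snd z + f (fst z)) \<longlongrightarrow> - f xb + f xb) (nhds (xb, - f xb))"
    by (intro tendsto_add isCont_tendsto_compose[OF assms(1)])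
  then have "\<forall>\<^sub>F z in nhds (xb, - f xb). dist (snd z + f (fst z)) 0 < \<delta>"
    using assms(3) by (intro tendstoD) simp_all
  moreover have "\<forall>\<^sub>F z in nhds (xb, - f xb). P (fst z)"
    using fz assms(2) by (auto simp: filterlim_iff)
  ultimately show ?thesis by (simp add: eventually_conj_iff)
qed

lemma metrically_regular_limiting_normal_bound:
  fixes f :: "real^'n \<Rightarrow> real^'m" and Df :: "real^'n \<Rightarrow> real^'n^'m"
  assumes fd: "\<And>x. (f has_derivative (\<lambda>h. Df x *v h)) (at x)" and "isCont Df xb"
    and mr: "metrically_regular (\<lambda>x. {f x + v | v. v \<in> Q x}) xb 0"
  obtains \<kappa> where "\<kappa> \<ge> 0" "\<forall>\<^sub>F z in nhds (xb, - f xb). z \<in> gph Q \<longrightarrow>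
      (\<forall>s\<in>limiting_normal_cone (gph Q) z. norm (snd s) \<le> \<kappa> * norm (fst s - transpose (Df xb) *v snd s))"
proof -
  obtain \<kappa> \<delta> where kd: "\<kappa> \<ge> 0" "\<delta> > 0"
    and reg: "\<And>x y r. y \<in> Q x \<Longrightarrow> norm (x - xb) < \<delta> \<Longrightarrow> norm (y + f x) < \<delta> \<Longrightarrow>
       r \<in> regular_normal_cone (gph Q) (x, y) \<Longrightarrow>
       norm (snd r) \<le> \<kappa> * norm (fst r - transpose (Df x) *v snd r)"
    using metrically_regular_regular_normal_bound[OF fd mr] by blast
  define \<eta> where "\<eta> = 1 / (2 * \<kappa> + 2)"
  have \<eta>: "\<eta> > 0" "\<kappa> * \<eta> \<le> 1 / 2" unfolding \<eta>_def using kd(1) by (auto simp: field_simps)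
  let ?zb = "(xb, - f xb)"
  have "isCont f xb" using fd by (rule has_derivative_continuous)
  moreover have "\<forall>\<^sub>F x in nhds xb. dist x xb < \<delta> \<and> dist (Df x) (Df xb) < \<eta>"
    using tendstoD[OF isCont_tendsto_compose[OF \<open>isCont Df xb\<close> filterlim_ident] \<eta>(1)] kd(2)
    by (auto simp: eventually_conj_iff eventually_nhds_metric intro: exI[of _ \<delta>])
  ultimately have near: "\<forall>\<^sub>F z in nhds ?zb. (dist (fst z) xb < \<delta> \<and> dist (Df (fst z)) (Df xb) < \<eta>)
                    \<and> norm (snd z + f (fst z)) < \<delta>"
    by (rule eventually_nhds_graph_point[OF _ _ kd(2)])
  have "\<forall>\<^sub>F z in nhds ?zb. \<forall>s\<in>limiting_normal_cone (gph Q) z.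
          norm (snd s) - 2 * \<kappa> * norm (fst s - transpose (Df xb) *v snd s) \<le> 0"
  proof (rule limiting_normal_cone_eventually_le)
    show "continuous_on UNIV (\<lambda>p. norm (snd (snd p)) - 2 * \<kappa> * norm (fst (snd p) - transpose (Df xb) *v snd (snd p)))"
      by (intro continuous_intros bounded_linear.continuous_on[OF matrix_vector_mul_bounded_linear])
    show "\<forall>\<^sub>F z in nhds ?zb. z \<in> gph Q \<longrightarrow> (\<forall>r\<in>regular_normal_cone (gph Q) z.
            norm (snd r) - 2 * \<kappa> * norm (fst r - transpose (Df xb) *v snd r) \<le> 0)"
      using near
    proof eventually_elim
      case (elim z)
      show ?case
      proof (intro impI ballI)
        fix r assume "z \<in> gph Q" "r \<in> regular_normal_cone (gph Q) z"
        then have "norm (snd r) \<le> \<kappa> * norm (fst r - transpose (Df (fst z)) *v snd r)"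
          using reg[of "snd z" "fst z" r] elim unfolding gph_def by (auto simp: dist_norm)
        then show "norm (snd r) - 2 * \<kappa> * norm (fst r - transpose (Df xb) *v snd r) \<le> 0"
          using norm_le_adjoint_perturb[OF _ kd(1) _ \<eta>(2)] elim by (fastforce simp: dist_norm)
      qed
    qed
  qed
  then have "\<forall>\<^sub>F z in nhds ?zb. z \<in> gph Q \<longrightarrow> (\<forall>s\<in>limiting_normal_cone (gph Q) z.
      norm (snd s) \<le> 2 * \<kappa> * norm (fst s - transpose (Df xb) *v snd s))"
    by (auto elim!: eventually_mono)
  with kd(1) show ?thesis using that[of "2 * \<kappa>"] by simp
qed

section \<open>The semismooth Newton step\<close>

lemma newton_matrix_transpose_mult:
  fixes G A :: "real^'n^'n"
  assumes "transpose G = G"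
  shows "transpose ((mat 1 - G) ** A + G) *v w = transpose A *v ((mat 1 - G) *v w) + G *v w"
  using assms
  by (simp add: transpose_add transpose_diff matrix_transpose_mul matrix_vector_mult_add_rdistrib
      matrix_vector_mul_assoc)

lemma newton_matrix_identity:
  fixes G A :: "real^'n^'n"
  assumes "((mat 1 - G) ** A + G) *v \<Delta> = (\<gamma> *\<^sub>R (mat 1 - G) + G) *v u"
  shows "((mat 1 - G) ** A + G) *v (e + \<Delta>) = G *v (e + u) + (mat 1 - G) *v (\<gamma> *\<^sub>R u + A *v e)"
proof -
  have "((mat 1 - G) ** A + G) *v \<Delta> = \<gamma> *\<^sub>R u - \<gamma> *\<^sub>R (G *v u) + G *v u"
    using assms by (simp add: matrix_vector_mult_add_rdistrib matrix_vector_mult_diff_rdistrib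
        scaleR_matrix_vector_assoc[symmetric] scaleR_diff_right)
  then show ?thesis
    by (simp add: matrix_vector_right_distrib matrix_vector_mult_add_rdistrib
        matrix_vector_mult_diff_rdistrib matrix_vector_mul_assoc[symmetric] matrix_vector_mult_scaleR
        algebra_simps)
qed

lemma newton_matrix_adjoint_bound:
  fixes G A A0 :: "real^'n^'n"
  assumes "transpose G = G"
    and normal: "\<And>w. norm ((mat 1 - G) *v w) \<le> \<kappa> * norm (G *v w + transpose A0 *v ((mat 1 - G) *v w))"
    and "\<kappa> \<ge> 0" "norm (A - A0) \<le> \<eta>" "\<kappa> * \<eta> \<le> 1 / 2" "norm A \<le> B"
  shows "norm w \<le> (1 + 2 * \<kappa> * (1 + B)) * norm (transpose ((mat 1 - G) ** A + G) *v w)"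
proof -
  define a b M where "a = (mat 1 - G) *v w" and "b = G *v w" and "M = (mat 1 - G) ** A + G"
  have MT: "transpose M *v w = b + transpose A *v a"
    unfolding M_def a_def b_def newton_matrix_transpose_mult[OF assms(1)] by (rule add.commute)
  have "norm (- a) \<le> \<kappa> * norm (b - transpose A0 *v (- a))"
    using normal[of w] unfolding a_def b_def
    by (simp only: matrix_vector_mult_uminus_right diff_minus_eq_add norm_minus_cancel)
  moreover have "norm (A0 - A) \<le> \<eta>" using assms(4) by (simp add: norm_minus_commute)
  ultimately have "norm (- a) \<le> 2 * \<kappa> * norm (b - transpose A *v (- a))"
    using norm_le_adjoint_perturb assms(3,5) by blast
  then have na: "norm a \<le> 2 * \<kappa> * norm (transpose M *v w)"
    unfolding MT by (simp only: matrix_vector_mult_uminus_right diff_minus_eq_add norm_minus_cancel)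
  have "norm b \<le> norm (transpose M *v w) + B * norm a"
  proof -
    have "norm (transpose A *v a) \<le> B * norm a"
      using norm_matrix_vector_mult_le[of "transpose A" a] assms(6)
      by (simp add: norm_transpose mult_right_mono order_trans)
    then show ?thesis using norm_triangle_ineq4[of "transpose M *v w" "transpose A *v a"]
      unfolding MT by simp
  qed
  moreover have "norm w \<le> norm a + norm b"
    using norm_triangle_ineq[of a b] unfolding a_def b_def by (simp add: matrix_vector_mult_diff_rdistrib)
  ultimately have "norm w \<le> (1 + B) * norm a + norm (transpose M *v w)"
    by (simp add: algebra_simps)
  also have "\<dots> \<le> (1 + B) * (2 * \<kappa> * norm (transpose M *v w)) + norm (transpose M *v w)"
    using na assms(6) order_trans[OF norm_ge_zero assms(6)] by (intro add_right_mono mult_left_mono) auto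
  finally show ?thesis unfolding M_def by (simp add: algebra_simps)
qed

text \<open>Used with e = x + \<Delta> - xb the new error, (dx, dy) the offset of the graph point
  (x + u, - \<gamma> u - f x) from (xb, - f xb) and \<rho> the linearization error of f at x.
  The error is tested against the w with transpose M *v w = e.\<close>
lemma newton_error_bound:
  fixes G M :: "real^'n^'n"
  assumes G: "transpose G = G"
    and inv: "\<And>w. norm w \<le> K * norm (transpose M *v w)"
    and eq: "M *v e = G *v dx - (mat 1 - G) *v dy - (mat 1 - G) *v \<rho>"
    and normal: "\<And>w. \<bar>(G *v w) \<bullet> dx - ((mat 1 - G) *v w) \<bullet> dy\<bar> \<le> c * norm w"
    and "onorm (\<lambda>v. G *v v) \<le> 1" "K \<ge> 0" "c \<ge> 0"
  shows "norm e \<le> K * (c + 2 * norm \<rho>)"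
proof -
  have "inj ((*v) (transpose M))"
  proof (rule injI)
    fix w1 w2 assume "transpose M *v w1 = transpose M *v w2"
    then show "w1 = w2" using inv[of "w1 - w2"] by (simp add: matrix_vector_mult_diff_distrib)
  qed
  then have "surj ((*v) (transpose M))"
    by (rule linear_injective_imp_surjective[OF matrix_vector_mul_linear]) simp
  then obtain w where w: "transpose M *v w = e" by (metis surjD)
  have IG_sym: "transpose (mat 1 - G) = mat 1 - G" using G by (simp add: transpose_diff)
  have IG: "norm ((mat 1 - G) *v \<rho>) \<le> 2 * norm \<rho>"
    by (rule onorm_le_one_imp_norm_complement_le[OF assms(5)])
  have "norm e * norm e = w \<bullet> (M *v e)"
    using transpose_matrix_inner[of M w e] w by (simp add: dot_square_norm power2_eq_square)
  also have "\<dots> = ((G *v w) \<bullet> dx - ((mat 1 - G) *v w) \<bullet> dy) - w \<bullet> ((mat 1 - G) *v \<rho>)"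
    unfolding eq using symmetric_matrix_inner[OF G] symmetric_matrix_inner[OF IG_sym]
    by (simp add: inner_diff_right)
  also have "\<dots> \<le> c * norm w + norm w * (2 * norm \<rho>)"
    using normal[of w] Cauchy_Schwarz_ineq2[of w "(mat 1 - G) *v \<rho>"] IG
      mult_left_mono[OF IG norm_ge_zero[of w]] by linarith
  also have "\<dots> = (c + 2 * norm \<rho>) * norm w" by (simp add: algebra_simps)
  also have "\<dots> \<le> (c + 2 * norm \<rho>) * (K * norm e)"
    using inv[of w] \<open>c \<ge> 0\<close> unfolding w by (intro mult_left_mono) auto
  finally have "norm e * norm e \<le> norm e * (K * (c + 2 * norm \<rho>))" by (simp add: algebra_simps)
  then show ?thesis
    using \<open>K \<ge> 0\<close> \<open>c \<ge> 0\<close> by (cases "e = 0") (auto simp: mult_le_cancel_left_pos)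
qed

definition semismooth_newton_step ::
  "real \<Rightarrow> (real^'n \<Rightarrow> real^'n) \<Rightarrow> (real^'n \<Rightarrow> real^'n^'n) \<Rightarrow> (real^'n \<Rightarrow> ereal) \<Rightarrow>
     real^'n \<Rightarrow> real^'n \<Rightarrow> real^'n^'n \<Rightarrow> real^'n \<Rightarrow> bool" where
  "semismooth_newton_step \<gamma> f Df q x u G \<Delta> \<longleftrightarrow>
     u = u_gamma \<gamma> f q x
     \<and> transpose G = G
     \<and> (\<forall>v. 0 \<le> v \<bullet> (G *v v))
     \<and> onorm (\<lambda>v. G *v v) \<le> 1
     \<and> (\<forall>vs. G *v vs \<in> coderiv (subdiff q) (x + u) (- \<gamma> *\<^sub>R u - f x) ((mat 1 - G) *v vs))
     \<and> ((mat 1 - G) ** Df x + G) *v \<Delta> = (\<gamma> *\<^sub>R (mat 1 - G) + G) *v u"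

lemma semismooth_newton_step_error:
  fixes f :: "real^'n \<Rightarrow> real^'n" and Df :: "real^'n \<Rightarrow> real^'n^'n" and q :: "real^'n \<Rightarrow> ereal"
  assumes step: "semismooth_newton_step \<gamma> f Df q x u G \<Delta>"
    and bound: "\<forall>s\<in>limiting_normal_cone (gph (subdiff q)) (prox_graph_point \<gamma> f q x).
                  norm (snd s) \<le> \<kappa> * norm (fst s - transpose (Df xb) *v snd s)"
    and semismooth: "\<forall>s\<in>limiting_normal_cone (gph (subdiff q)) (prox_graph_point \<gamma> f q x).
                  \<bar>s \<bullet> (prox_graph_point \<gamma> f q x - (xb, - f xb))\<bar>
                    \<le> \<epsilon> * norm s * norm (prox_graph_point \<gamma> f q x - (xb, - f xb))"
    and "\<kappa> \<ge> 0" "norm (Df x - Df xb) \<le> \<eta>" "\<kappa> * \<eta> \<le> 1 / 2" "\<epsilon> \<ge> 0"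
  shows "norm (x + \<Delta> - xb) \<le> (1 + 2 * \<kappa> * (1 + (norm (Df xb) + \<eta>)))
           * (3 * \<epsilon> * norm (prox_graph_point \<gamma> f q x - (xb, - f xb))
              + 2 * norm (f x - f xb - Df x *v (x - xb)))"
proof -
  let ?z = "prox_graph_point \<gamma> f q x" and ?zb = "(xb, - f xb)"
  have G: "transpose G = G" "onorm (\<lambda>v. G *v v) \<le> 1"
    and normal: "\<And>w. (G *v w, - ((mat 1 - G) *v w)) \<in> limiting_normal_cone (gph (subdiff q)) ?z"
    and sys: "((mat 1 - G) ** Df x + G) *v \<Delta> = (\<gamma> *\<^sub>R (mat 1 - G) + G) *v u"
    and u: "u = u_gamma \<gamma> f q x"
    using step unfolding semismooth_newton_step_def coderiv_def prox_graph_point_def by auto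
  have "norm w \<le> (1 + 2 * \<kappa> * (1 + (norm (Df xb) + \<eta>))) * norm (transpose ((mat 1 - G) ** Df x + G) *v w)"
    for w
  proof (rule newton_matrix_adjoint_bound[OF G(1) _ assms(4) assms(5) assms(6)])
    fix w
    have "norm (snd (G *v w, - ((mat 1 - G) *v w))) \<le> \<kappa> * norm (fst (G *v w, - ((mat 1 - G) *v w))
            - transpose (Df xb) *v snd (G *v w, - ((mat 1 - G) *v w)))"
      using bound normal[of w] by blast
    then show "norm ((mat 1 - G) *v w) \<le> \<kappa> * norm (G *v w + transpose (Df xb) *v ((mat 1 - G) *v w))"
      by (simp only: fst_conv snd_conv matrix_vector_mult_uminus_right diff_minus_eq_add norm_minus_cancel)
    show "norm (Df x) \<le> norm (Df xb) + \<eta>"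
      using norm_triangle_sub[of "Df x" "Df xb"] assms(5) by linarith
  qed
  then show ?thesis
  proof (rule newton_error_bound[OF G(1) _ _ _ G(2)])
    show "((mat 1 - G) ** Df x + G) *v (x + \<Delta> - xb) = G *v (x + u - xb)
      - (mat 1 - G) *v (- \<gamma> *\<^sub>R u - f x + f xb) - (mat 1 - G) *v (f x - f xb - Df x *v (x - xb))"
      using newton_matrix_identity[OF sys, of "x - xb"]
      by (simp add: algebra_simps matrix_vector_mult_diff_distrib)
    fix w
    let ?s = "(G *v w, - ((mat 1 - G) *v w))"
    have "norm ?s \<le> 3 * norm w"
      using norm_Pair_le[of "G *v w" "- ((mat 1 - G) *v w)"] onorm_le_one_imp_norm_le[OF G(2), of w]
        onorm_le_one_imp_norm_complement_le[OF G(2), of w] by simp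
    then have "\<bar>?s \<bullet> (?z - ?zb)\<bar> \<le> \<epsilon> * (3 * norm w) * norm (?z - ?zb)"
      using semismooth normal[of w] \<open>\<epsilon> \<ge> 0\<close>
      by (meson mult_left_mono mult_right_mono norm_ge_zero order_trans)
    moreover have "?s \<bullet> (?z - ?zb) = (G *v w) \<bullet> (x + u - xb) - ((mat 1 - G) *v w) \<bullet> (- \<gamma> *\<^sub>R u - f x + f xb)"
      unfolding prox_graph_point_def u by (simp add: inner_Pair)
    ultimately show "\<bar>(G *v w) \<bullet> (x + u - xb) - ((mat 1 - G) *v w) \<bullet> (- \<gamma> *\<^sub>R u - f x + f xb)\<bar>
        \<le> 3 * \<epsilon> * norm (?z - ?zb) * norm w"
      by (simp add: mult_ac)
  qed (use assms(4,7) order_trans[OF norm_ge_zero assms(5)] in auto)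
qed

lemma prox_graph_point_normal_estimates:
  fixes f :: "real^'n \<Rightarrow> real^'n" and Df :: "real^'n \<Rightarrow> real^'n^'n" and q :: "real^'n \<Rightarrow> ereal"
  assumes fd: "\<And>x. (f has_derivative (\<lambda>h. Df x *v h)) (at x)" and Dc: "isCont Df xb"
    and q: "proper_fun q" "convex_fun q" "lsc_fun q" and sol: "- f xb \<in> subdiff q xb"
    and mr: "metrically_regular (\<lambda>x. {f x + v | v. v \<in> subdiff q x}) xb 0"
    and ss: "semismooth_star (subdiff q) xb (- f xb)" and "\<gamma> > 0"
  obtains \<kappa> where "\<kappa> \<ge> 0"
    "\<forall>\<^sub>F x in nhds xb. \<forall>s\<in>limiting_normal_cone (gph (subdiff q)) (prox_graph_point \<gamma> f q x).
       norm (snd s) \<le> \<kappa> * norm (fst s - transpose (Df xb) *v snd s)"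
    "\<And>\<epsilon>. \<epsilon> > 0 \<Longrightarrow> \<forall>\<^sub>F x in nhds xb. \<forall>s\<in>limiting_normal_cone (gph (subdiff q)) (prox_graph_point \<gamma> f q x).
       \<bar>s \<bullet> (prox_graph_point \<gamma> f q x - (xb, - f xb))\<bar>
         \<le> \<epsilon> * norm s * norm (prox_graph_point \<gamma> f q x - (xb, - f xb))"
proof -
  let ?z = "prox_graph_point \<gamma> f q" and ?zb = "(xb, - f xb)" and ?C = "gph (subdiff q)"
  obtain C where "\<forall>\<^sub>F x in nhds xb. norm (?z x - ?zb) \<le> C * norm (x - xb)"
    using prox_graph_point_calm[OF \<open>\<gamma> > 0\<close> q sol fd] by blast
  then have z_lim: "filterlim ?z (nhds ?zb) (nhds xb)" by (rule calm_imp_tendsto)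
  obtain \<kappa> where \<kappa>: "\<kappa> \<ge> 0" and "\<forall>\<^sub>F z in nhds ?zb. z \<in> ?C \<longrightarrow> (\<forall>s\<in>limiting_normal_cone ?C z.
      norm (snd s) \<le> \<kappa> * norm (fst s - transpose (Df xb) *v snd s))"
    using metrically_regular_limiting_normal_bound[OF fd Dc mr] by blast
  then have "\<forall>\<^sub>F x in nhds xb. \<forall>s\<in>limiting_normal_cone ?C (?z x).
      norm (snd s) \<le> \<kappa> * norm (fst s - transpose (Df xb) *v snd s)"
    using z_lim prox_graph_point_in_gph[OF \<open>\<gamma> > 0\<close> q sol]
    by (auto simp: filterlim_iff elim!: eventually_mono)
  moreover have "\<forall>\<^sub>F x in nhds xb. \<forall>s\<in>limiting_normal_cone ?C (?z x).
      \<bar>s \<bullet> (?z x - ?zb)\<bar> \<le> \<epsilon> * norm s * norm (?z x - ?zb)" if "\<epsilon> > 0" for \<epsilon>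
    using semismooth_star_graph_estimate[OF ss that] z_lim by (auto simp: filterlim_iff)
  ultimately show ?thesis using that \<kappa> by blast
qed

lemma semismooth_newton_step_superlinear:
  fixes f :: "real^'n \<Rightarrow> real^'n" and Df :: "real^'n \<Rightarrow> real^'n^'n" and q :: "real^'n \<Rightarrow> ereal"
  assumes fd: "\<And>x. (f has_derivative (\<lambda>h. Df x *v h)) (at x)" and Dc: "isCont Df xb"
    and q: "proper_fun q" "convex_fun q" "lsc_fun q" and sol: "- f xb \<in> subdiff q xb"
    and mr: "metrically_regular (\<lambda>x. {f x + v | v. v \<in> subdiff q x}) xb 0"
    and ss: "semismooth_star (subdiff q) xb (- f xb)"
    and "\<gamma> > 0" "\<epsilon> > 0"
  shows "\<forall>\<^sub>F x in nhds xb. \<forall>u G \<Delta>. semismooth_newton_step \<gamma> f Df q x u G \<Delta> \<longrightarrow>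
           norm (x + \<Delta> - xb) \<le> \<epsilon> * norm (x - xb)"
proof -
  let ?z = "prox_graph_point \<gamma> f q" and ?zb = "(xb, - f xb)"
  obtain C where C: "C > 0" and z_near: "\<forall>\<^sub>F x in nhds xb. norm (?z x - ?zb) \<le> C * norm (x - xb)"
    using prox_graph_point_calm[OF \<open>\<gamma> > 0\<close> q sol fd] by blast
  obtain \<kappa> where \<kappa>: "\<kappa> \<ge> 0" and normal_bound: "\<forall>\<^sub>F x in nhds xb. \<forall>s\<in>limiting_normal_cone (gph (subdiff q)) (?z x).
       norm (snd s) \<le> \<kappa> * norm (fst s - transpose (Df xb) *v snd s)"
    and semismooth: "\<And>\<epsilon>'. \<epsilon>' > 0 \<Longrightarrow> \<forall>\<^sub>F x in nhds xb. \<forall>s\<in>limiting_normal_cone (gph (subdiff q)) (?z x).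
       \<bar>s \<bullet> (?z x - ?zb)\<bar> \<le> \<epsilon>' * norm s * norm (?z x - ?zb)"
    using prox_graph_point_normal_estimates[OF fd Dc q sol mr ss \<open>\<gamma> > 0\<close>] by blast
  define \<eta> where "\<eta> = 1 / (2 * \<kappa> + 2)"
  define K where "K = 1 + 2 * \<kappa> * (1 + (norm (Df xb) + \<eta>))"
  have \<eta>: "\<eta> > 0" "\<kappa> * \<eta> \<le> 1 / 2" unfolding \<eta>_def using \<kappa> by (auto simp: field_simps)
  have K: "K > 0" unfolding K_def using \<kappa> \<eta> by (simp add: add_pos_nonneg)
  have "\<forall>\<^sub>F x in nhds xb. dist (Df x) (Df xb) < \<eta>"
    using tendstoD[OF isCont_tendsto_compose[OF Dc filterlim_ident] \<eta>(1)] by simp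
  moreover have "\<forall>\<^sub>F x in nhds xb. norm (f x - f xb - Df x *v (x - xb)) \<le> \<epsilon> / (4 * K) * norm (x - xb)"
    using \<open>\<epsilon> > 0\<close> K by (intro has_derivative_continuous_remainder[OF fd Dc]) simp
  moreover have "\<forall>\<^sub>F x in nhds xb. \<forall>s\<in>limiting_normal_cone (gph (subdiff q)) (?z x).
      \<bar>s \<bullet> (?z x - ?zb)\<bar> \<le> \<epsilon> / (6 * K * C) * norm s * norm (?z x - ?zb)"
    using \<open>\<epsilon> > 0\<close> K C by (intro semismooth) simp
  ultimately show ?thesis
    using z_near normal_bound
  proof eventually_elim
    case (elim x)
    show ?case
    proof (intro allI impI)
      fix u G \<Delta> assume step: "semismooth_newton_step \<gamma> f Df q x u G \<Delta>"
      have "norm (Df x - Df xb) \<le> \<eta>" "\<epsilon> / (6 * K * C) \<ge> 0"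
        using elim(1) \<open>\<epsilon> > 0\<close> K C by (simp_all add: dist_norm)
      from semismooth_newton_step_error[OF step elim(5,3) \<kappa> this(1) \<eta>(2) this(2)]
      have "norm (x + \<Delta> - xb) \<le> K * (3 * (\<epsilon> / (6 * K * C)) * norm (?z x - ?zb)
                   + 2 * norm (f x - f xb - Df x *v (x - xb)))"
        unfolding K_def .
      also have "\<dots> \<le> K * (3 * (\<epsilon> / (6 * K * C)) * (C * norm (x - xb)) + 2 * (\<epsilon> / (4 * K) * norm (x - xb)))"
        using elim(2,4) K C \<open>\<epsilon> > 0\<close> by (intro mult_left_mono add_mono) auto
      also have "\<dots> = \<epsilon> * norm (x - xb)"
        using K C by (simp add: field_simps)
      finally show "norm (x + \<Delta> - xb) \<le> \<epsilon> * norm (x - xb)" .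
    qed
  qed
qed

lemma local_superlinear_convergence:
  fixes xb :: "'a::real_normed_vector"
  assumes step: "\<And>\<epsilon>. \<epsilon> > 0 \<Longrightarrow> \<forall>\<^sub>F y in nhds xb. \<forall>y'. R y y' \<longrightarrow> norm (y' - xb) \<le> \<epsilon> * norm (y - xb)"
  obtains U where "open U" "xb \<in> U"
    "\<And>x. x 0 \<in> U \<Longrightarrow> (\<And>k. R (x k) (x (Suc k))) \<Longrightarrow>
       x \<longlonglongrightarrow> xb \<and> (\<lambda>k. norm (x (Suc k) - xb)) \<in> o(\<lambda>k. norm (x k - xb))"
proof -
  obtain r where r: "r > 0"
    and contract: "\<And>y y'. dist y xb < r \<Longrightarrow> R y y' \<Longrightarrow> norm (y' - xb) \<le> 1 / 2 * norm (y - xb)"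
    using step[of "1 / 2"] unfolding eventually_nhds_metric by auto
  have "x \<longlonglongrightarrow> xb \<and> (\<lambda>k. norm (x (Suc k) - xb)) \<in> o(\<lambda>k. norm (x k - xb))"
    if x0: "x 0 \<in> ball xb r" and R: "\<And>k. R (x k) (x (Suc k))" for x
  proof
    have geometric: "norm (x k - xb) \<le> (1 / 2) ^ k * norm (x 0 - xb) \<and> dist (x k) xb < r" for k
    proof (induction k)
      case 0
      then show ?case using x0 by (simp add: dist_commute)
    next
      case (Suc k)
      then have "norm (x (Suc k) - xb) \<le> 1 / 2 * norm (x k - xb)" using contract R by blast
      with Suc show ?case using r by (auto simp: dist_norm)
    qed
    have lim: "(\<lambda>k. (1 / 2) ^ k * norm (x 0 - xb)) \<longlonglongrightarrow> 0"
      by (intro tendsto_mult_left_zero LIMSEQ_realpow_zero) simp_all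
    have "\<forall>k. norm (x k - xb) \<le> (1 / 2) ^ k * norm (x 0 - xb)" using geometric by blast
    then have "(\<lambda>k. x k - xb) \<longlonglongrightarrow> 0"
      by (rule Lim_null_comparison[OF always_eventually lim])
    then show conv: "x \<longlonglongrightarrow> xb" by (rule LIM_zero_cancel)
    show "(\<lambda>k. norm (x (Suc k) - xb)) \<in> o(\<lambda>k. norm (x k - xb))"
    proof (rule landau_o.smallI)
      fix c :: real assume "c > 0"
      have "\<forall>\<^sub>F k in sequentially. \<forall>y'. R (x k) y' \<longrightarrow> norm (y' - xb) \<le> c * norm (x k - xb)"
        using step[OF \<open>c > 0\<close>] conv by (auto simp: filterlim_iff)
      then show "\<forall>\<^sub>F k in sequentially. norm (norm (x (Suc k) - xb)) \<le> c * norm (norm (x k - xb))"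
        by eventually_elim (use R in simp)
    qed
  qed
  then show ?thesis using that[of "ball xb r"] r by simp
qed

lemma semismooth_newton_local_superlinear:
  fixes f :: "real^'n \<Rightarrow> real^'n" and Df :: "real^'n \<Rightarrow> real^'n^'n" and q :: "real^'n \<Rightarrow> ereal"
  assumes fd: "\<And>x. (f has_derivative (\<lambda>h. Df x *v h)) (at x)" and Dc: "isCont Df xb"
    and q: "proper_fun q" "convex_fun q" "lsc_fun q" and sol: "- f xb \<in> subdiff q xb"
    and mr: "metrically_regular (\<lambda>x. {f x + v | v. v \<in> subdiff q x}) xb 0"
    and ss: "semismooth_star (subdiff q) xb (- f xb)" and "\<gamma> > 0"
  shows "\<exists>U. open U \<and> xb \<in> U \<and>
    (\<forall>x u G \<Delta>. x 0 \<in> U \<and> (\<forall>k. semismooth_newton_step \<gamma> f Df q (x k) (u k) (G k) (\<Delta> k) \<and> x (Suc k) = x k + \<Delta> k)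
       \<longrightarrow> x \<longlonglongrightarrow> xb \<and> (\<lambda>k. norm (x (Suc k) - xb)) \<in> o(\<lambda>k. norm (x k - xb)))"
proof -
  let ?R = "\<lambda>y y'. \<exists>u G \<Delta>. semismooth_newton_step \<gamma> f Df q y u G \<Delta> \<and> y' = y + \<Delta>"
  have "\<forall>\<^sub>F y in nhds xb. \<forall>y'. ?R y y' \<longrightarrow> norm (y' - xb) \<le> \<epsilon> * norm (y - xb)" if "\<epsilon> > 0" for \<epsilon>
    using semismooth_newton_step_superlinear[OF assms that] by (rule eventually_mono) blast
  then obtain U where "open U" "xb \<in> U" and conv: "\<And>x. x 0 \<in> U \<Longrightarrow> (\<And>k. ?R (x k) (x (Suc k))) \<Longrightarrow>
      x \<longlonglongrightarrow> xb \<and> (\<lambda>k. norm (x (Suc k) - xb)) \<in> o(\<lambda>k. norm (x k - xb))"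
    by (rule local_superlinear_convergence) auto
  have "x \<longlonglongrightarrow> xb \<and> (\<lambda>k. norm (x (Suc k) - xb)) \<in> o(\<lambda>k. norm (x k - xb))"
    if "x 0 \<in> U" "\<forall>k. semismooth_newton_step \<gamma> f Df q (x k) (u k) (G k) (\<Delta> k) \<and> x (Suc k) = x k + \<Delta> k"
    for x u G \<Delta>
    using conv[of x, OF that(1)] that(2) by blast
  with \<open>open U\<close> \<open>xb \<in> U\<close> show ?thesis by blast
qed

theorem theorem4p6:
  fixes f :: "real^'n \<Rightarrow> real^'n"
    and Df :: "real^'n \<Rightarrow> real^'n^'n"
    and q :: "real^'n \<Rightarrow> ereal"
    and xb :: "real^'n"
  assumes f_deriv: "\<And>x. (f has_derivative (\<lambda>h. Df x *v h)) (at x)"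
    and f_C1: "continuous_on UNIV Df"
    and q_proper: "proper_fun q" and q_convex: "convex_fun q" and q_lsc: "lsc_fun q"
    and in_gph: "(xb, 0) \<in> gph (\<lambda>x. {f x + v | v. v \<in> subdiff q x})"
    and metreg: "metrically_regular (\<lambda>x. {f x + v | v. v \<in> subdiff q x}) xb 0"
    and ssstar: "semismooth_star (subdiff q) xb (- f xb)"
  shows "\<forall>\<gamma>>0. \<exists>U. open U \<and> xb \<in> U \<and>
    (\<forall>x u G \<Delta>. x 0 \<in> U \<and>
       (\<forall>k. u k = u_gamma \<gamma> f q (x k)
          \<and> transpose (G k) = G k
          \<and> (\<forall>v. 0 \<le> v \<bullet> (G k *v v))
          \<and> onorm (\<lambda>v. G k *v v) \<le> 1
          \<and> (\<forall>vs. G k *v vs \<in> coderiv (subdiff q) (x k + u k) (- \<gamma> *\<^sub>R u k - f (x k))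
                                     ((mat 1 - G k) *v vs))
          \<and> ((mat 1 - G k) ** Df (x k) + G k) *v \<Delta> k = (\<gamma> *\<^sub>R (mat 1 - G k) + G k) *v u k
          \<and> x (Suc k) = x k + \<Delta> k)
     \<longrightarrow> x \<longlonglongrightarrow> xb \<and> (\<lambda>k. norm (x (Suc k) - xb)) \<in> o(\<lambda>k. norm (x k - xb)))"
proof -
  have sol: "- f xb \<in> subdiff q xb"
    using in_gph unfolding gph_def by (auto simp: add_eq_0_iff)
  have "isCont Df xb" using f_C1 by (simp add: continuous_on_eq_continuous_at)
  show ?thesis
    using semismooth_newton_local_superlinear[OF f_deriv \<open>isCont Df xb\<close> q_proper q_convex q_lsc sol
        metreg ssstar]
    unfolding semismooth_newton_step_def conj_assoc by blast
qed

end
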